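(* The learning problem for $\mathbf{LTL}(\mathbf{X},\wedge)$ is in $\mathsf{NP}$: given words $u_1,\dots,u_n,v_1,\dots,v_n\in\Sigma^*$ and $k\in\mathbb{N}$ encoded in binary, deciding whether there exists a formula of $\mathbf{LTL}(\mathbf{X},\wedge)$ of size at most $k$ separating $u_1,\dots,u_n$ from $v_1,\dots,v_n$ is in $\mathsf{NP}$.
   Context: Alphabet $\Sigma=\{a,b\}$. Words are nonempty, indexed from position 1. $\mathbf{LTL}(\mathbf{X},\wedge)$: formulas built from letters $c\in\Sigma$, $\wedge$, and $\mathbf{X}$, with semantics on a word $w$ of length $\ell$ at position $i\in[1,\ell]$: $w,i\models c$ iff $w(i)=c$; $\wedge$ as usual; $w,i\models\mathbf{X}\phi$ iff $i<\ell$ and $w,i+1\models\phi$; $w\models\phi$ iff $w,1\models\phi$. Size = number of nodes of the syntax tree. $\phi$ separates $u_1,\dots,u_n$ from $v_1,\dots,v_m$ if all $u_j\models\phi$ and all $v_j\not\models\phi$. The input size is $O(n\ell+\log k)$ where $\ell$ is the maximal word length. *)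

theory Defs
  imports Main
begin

datatype letter = La | Lb

datatype ltl = Lit letter | Conj ltl ltl | Nxt ltl

fun fsize :: "ltl \<Rightarrow> nat" where
  "fsize (Lit c) = 1"
| "fsize (Conj f g) = 1 + fsize f + fsize g"
| "fsize (Nxt f) = 1 + fsize f"

text \<open>Semantics at position i (positions are 1-based, 1 \<le> i \<le> length w).\<close>
fun holds :: "letter list \<Rightarrow> nat \<Rightarrow> ltl \<Rightarrow> bool" where
  "holds w i (Lit c) = (1 \<le> i \<and> i \<le> length w \<and> w ! (i - 1) = c)"
| "holds w i (Conj f g) = (holds w i f \<and> holds w i g)"
| "holds w i (Nxt f) = (1 \<le> i \<and> i < length w \<and> holds w (i + 1) f)"

definition models :: "letter list \<Rightarrow> ltl \<Rightarrow> bool" where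
  "models w f = holds w 1 f"

definition separates :: "ltl \<Rightarrow> letter list list \<Rightarrow> letter list list \<Rightarrow> bool" where
  "separates f us vs = ((\<forall>u\<in>set us. models u f) \<and> (\<forall>v\<in>set vs. \<not> models v f))"

fun enc_letter :: "letter \<Rightarrow> nat" where
  "enc_letter La = 1" | "enc_letter Lb = 2"

definition enc_word :: "letter list \<Rightarrow> nat list" where
  "enc_word w = map enc_letter w @ [3]"

fun enc_bin :: "nat \<Rightarrow> nat list" where
  "enc_bin k = (if k = 0 then [] else (if k mod 2 = 0 then 5 else 6) # enc_bin (k div 2))"

definition enc_inst :: "letter list list \<Rightarrow> letter list list \<Rightarrow> nat \<Rightarrow> nat list" where
  "enc_inst us vs k = concat (map enc_word us) @ [4] @ concat (map enc_word vs) @ [4] @ enc_bin k"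

definition LEARN_LTL_X_AND :: "nat list set" where
  "LEARN_LTL_X_AND = {enc_inst us vs k | us vs k.
      length us = length vs \<and> (\<forall>w\<in>set (us @ vs). w \<noteq> []) \<and>
      (\<exists>f. fsize f \<le> k \<and> separates f us vs)}"

text \<open>States 0..Q-1 (0 initial, 1 accepting and halting), tape symbols 0..S-1
  (0 is the blank), head moves in {-1,0,1}.\<close>
record tm =
  tm_Q :: nat
  tm_S :: nat
  tm_delta :: "nat \<Rightarrow> nat \<Rightarrow> nat \<times> nat \<times> int"

definition tm_wf :: "tm \<Rightarrow> bool" where
  "tm_wf M = (2 \<le> tm_Q M \<and> 1 \<le> tm_S M \<and>
     (\<forall>q<tm_Q M. \<forall>s<tm_S M. case tm_delta M q s of (q', s', m) \<Rightarrow>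
        q' < tm_Q M \<and> s' < tm_S M \<and> m \<in> {-1, 0, 1}))"

type_synonym config = "nat \<times> int \<times> (int \<Rightarrow> nat)"

fun tm_step :: "tm \<Rightarrow> config \<Rightarrow> config" where
  "tm_step M (q, h, tp) = (if q = 1 then (q, h, tp) else
     (case tm_delta M q (tp h) of (q', s', m) \<Rightarrow> (q', h + m, tp(h := s'))))"

definition tm_init :: "nat list \<Rightarrow> config" where
  "tm_init x = (0, 0, \<lambda>i. if 0 \<le> i \<and> nat i < length x then x ! nat i else 0)"

definition accepts_within :: "tm \<Rightarrow> nat list \<Rightarrow> nat \<Rightarrow> bool" where
  "accepts_within M x t = (fst ((tm_step M ^^ t) (tm_init x)) = 1)"

definition in_NP :: "nat list set \<Rightarrow> bool" where
  "in_NP L = (\<exists>M c d. tm_wf M \<and> 7 < tm_S M \<and>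
     (\<forall>x. set x \<subseteq> {1..6} \<longrightarrow>
        (x \<in> L \<longleftrightarrow> (\<exists>y. set y \<subseteq> {1, 2} \<and> length y \<le> c * (length x + 1) ^ d \<and>
                        accepts_within M (x @ [7] @ y) (c * (length x + 1) ^ d)))))"

end

theory Submission
  imports Defs "HOL-Library.Countable"
begin

text \<open>
  A formula of LTL(X, and) is a conjunction of constraints "the letter at position q is c", so
  it amounts to a finite set of positions together with letters. A separating formula may be
  normalised to test only positions inside the first positive word u, at which all positive words
  carry the letter of u, and a formula testing the position set P with maximal element M has size
  at least M + 2 |P| - 1. Hence a certificate is a word over {Adv, Tst} of linear length: one Adv
  per step to the right and a pair Tst Tst per tested position, the letters being read off u.

  The verifier checks a certificate by finitely many left-to-right sweeps of a finite-state
  transducer over the tape, one sweep per instruction (plus the sweeps of a syntax check and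
  one per word, which check that there are as many negative as positive words). Each sweep
  advances a cursor in every word or tests the letter under the cursor, and decrements the
  binary counter k; a finite-state transducer driven by sweeps is compiled into a Turing machine
  whose running time is the number of sweeps times twice the tape length, hence quadratic.
\<close>

section \<open>Turing machines that sweep a finite-state transducer over the tape\<close>

datatype 'a verdict = Accept | Reject | Continue 'a

definition tape_of :: "nat list \<Rightarrow> int \<Rightarrow> nat" where
  "tape_of xs = (\<lambda>i. if 0 \<le> i \<and> nat i < length xs then xs ! nat i else 0)"

text \<open>The transducer may only write the symbols 1..31; any other output leaves the cell unchanged,
  so that blanks keep marking the ends of the input.\<close>

definition written_symbol :: "nat \<Rightarrow> nat \<Rightarrow> nat" where
  "written_symbol c c' = (if c' = 0 \<or> 32 \<le> c' then c else c')"

fun sweep :: "('a \<Rightarrow> nat \<Rightarrow> 'a \<times> nat) \<Rightarrow> 'a \<Rightarrow> nat list \<Rightarrow> 'a \<times> nat list" where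
  "sweep R st [] = (st, [])"
| "sweep R st (c # cs) = (let r = R st c; p = sweep R (fst r) cs in (fst p, written_symbol c (snd r) # snd p))"

lemma sweep_append: "sweep R st (xs @ ys) =
  (let p1 = sweep R st xs; p2 = sweep R (fst p1) ys in (fst p2, snd p1 @ snd p2))"
  by (induction xs arbitrary: st) (auto simp: Let_def)

lemma sweep_length: "length (snd (sweep R st xs)) = length xs"
  by (induction xs arbitrary: st) (auto simp: Let_def)

lemma sweep_nz:
  "\<forall>c\<in>set xs. c \<noteq> 0 \<Longrightarrow> \<forall>c\<in>set (snd (sweep R st xs)). c \<noteq> 0"
  by (induction xs arbitrary: st) (auto simp: Let_def written_symbol_def)

text \<open>Machine state 0 is the initial state, 1 accepts and 2 rejects; every other state codes a
  transducer state together with the direction of the current sweep (True for left to right).\<close>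

definition state_code :: "bool \<times> 'a::countable \<Rightarrow> nat" where
  "state_code x = to_nat x + 3"

definition decode_state :: "'a::countable \<Rightarrow> nat \<Rightarrow> bool \<times> 'a" where
  "decode_state st0 q = (if q = 0 then (True, st0) else from_nat (q - 3))"

lemma decode_state_code[simp]: "decode_state st0 (state_code x) = x"
  by (simp add: decode_state_def state_code_def)

lemma state_code_ge[simp]:
  "state_code x \<noteq> 0" "state_code x \<noteq> 1" "state_code x \<noteq> 2" "state_code x \<noteq> Suc 0"
  by (auto simp: state_code_def)

definition sweep_delta :: "('a::countable \<Rightarrow> nat \<Rightarrow> 'a \<times> nat) \<Rightarrow> ('a \<Rightarrow> 'a verdict) \<Rightarrow> 'a \<Rightarrow> nat \<Rightarrow> nat \<Rightarrow> nat \<times> nat \<times> int" where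
  "sweep_delta R E st0 q c = (if q = 2 then (2, c, 0) else
     (case decode_state st0 q of (d, st) \<Rightarrow>
       if d then (if c = 0 then (case E st of Accept \<Rightarrow> (1, 0, 0) | Reject \<Rightarrow> (2, 0, 0)
                                | Continue st' \<Rightarrow> (state_code (False, st'), 0, -1))
                  else (case R st c of (st', c') \<Rightarrow> (state_code (True, st'), written_symbol c c', 1)))
       else (if c = 0 then (state_code (True, st), 0, 1) else (q, c, -1))))"

definition sweep_tm :: "('a::{countable,finite} \<Rightarrow> nat \<Rightarrow> 'a \<times> nat) \<Rightarrow> ('a \<Rightarrow> 'a verdict) \<Rightarrow> 'a \<Rightarrow> tm" where
  "sweep_tm R E st0 = \<lparr>tm_Q = Max (range (state_code :: bool \<times> 'a \<Rightarrow> nat)) + 1, tm_S = 32, tm_delta = sweep_delta R E st0\<rparr>"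

lemma sweep_tm_wf: "tm_wf (sweep_tm R E st0)"
proof -
  let ?Q = "Max (range (state_code :: bool \<times> 'a \<Rightarrow> nat)) + 1"
  have fin: "finite (range (state_code :: bool \<times> 'a \<Rightarrow> nat))" by (rule finite_imageI) simp
  have lt: "state_code x < ?Q" for x :: "bool \<times> 'a"
    using Max_ge[OF fin, of "state_code x"] by (simp add: less_Suc_eq_le)
  have q3: "3 \<le> ?Q" using lt[of "(True, undefined)"] by (simp add: state_code_def)
  show ?thesis
    unfolding tm_wf_def sweep_tm_def
    using lt q3 by (auto simp: sweep_delta_def written_symbol_def split: prod.splits verdict.splits)
qed

abbreviation "sweep_step R E st0 \<equiv> tm_step (sweep_tm R E st0)"

lemma sweep_step_eq: "sweep_step R E st0 (q, h, tp) = (if q = 1 then (q, h, tp) else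
   (case sweep_delta R E st0 q (tp h) of (q', s', m) \<Rightarrow> (q', h + m, tp(h := s'))))"
  by (simp add: sweep_tm_def)

lemma reject_state_fixed: "(sweep_step R E st0 ^^ t) (2, h, tp) = (2, h, tp)"
  by (induction t) (auto simp: sweep_tm_def sweep_delta_def)

lemma accept_state_fixed: "(sweep_step R E st0 ^^ t) (1, h, tp) = (1, h, tp)"
  by (induction t) (auto simp: sweep_step_eq)

lemma tape_of_update: "length ys = i \<Longrightarrow> i < length xs \<Longrightarrow>
  (tape_of (ys @ drop i xs))(int i := c) = tape_of (ys @ [c] @ drop (Suc i) xs)"
  by (auto simp: tape_of_def fun_eq_iff nth_append Cons_nth_drop_Suc[symmetric] nat_less_iff
      split: if_splits)

lemma tape_of_nth: "i < length xs \<Longrightarrow> tape_of xs (int i) = xs ! i"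
  by (simp add: tape_of_def)

lemma funpow_add_apply: "(f ^^ (a + b)) x = (f ^^ a) ((f ^^ b) x)"
  by (simp only: funpow_add comp_apply)

lemma run_forward:
  assumes nz: "\<forall>c\<in>set xs. c \<noteq> 0" and q: "q \<noteq> 1" "q \<noteq> 2" "decode_state st0 q = (True, st)"
  shows "i \<le> length xs \<Longrightarrow> \<exists>q'. (sweep_step R E st0 ^^ i) (q, 0, tape_of xs) =
     (q', int i, tape_of (snd (sweep R st (take i xs)) @ drop i xs)) \<and> q' \<noteq> 1 \<and> q' \<noteq> 2 \<and>
     decode_state st0 q' = (True, fst (sweep R st (take i xs)))"
proof (induction i)
  case 0
  then show ?case using q by simp
next
  case (Suc i)
  then obtain q' where IH: "(sweep_step R E st0 ^^ i) (q, 0, tape_of xs) =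
     (q', int i, tape_of (snd (sweep R st (take i xs)) @ drop i xs))" "q' \<noteq> 1" "q' \<noteq> 2"
     "decode_state st0 q' = (True, fst (sweep R st (take i xs)))" by auto
  let ?ys = "snd (sweep R st (take i xs))"
  have il: "i < length xs" using Suc by simp
  have ly: "length ?ys = i" using il by (simp add: sweep_length)
  have tv: "tape_of (?ys @ drop i xs) (int i) = xs ! i"
    using il ly by (simp add: tape_of_def nth_append)
  have nzi: "xs ! i \<noteq> 0" using nz il by auto
  have tk: "take (Suc i) xs = take i xs @ [xs ! i]" using il by (simp add: take_Suc_conv_app_nth)
  obtain s1 c1 where Rc: "R (fst (sweep R st (take i xs))) (xs ! i) = (s1, c1)" by force
  have g: "sweep_delta R E st0 q' (xs ! i) = (state_code (True, s1), written_symbol (xs ! i) c1, 1)"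
    using IH(3,4) nzi Rc by (simp add: sweep_delta_def)
  have st1: "(sweep_step R E st0 ^^ Suc i) (q, 0, tape_of xs) = sweep_step R E st0 (q', int i, tape_of (?ys @ drop i xs))"
    using IH(1) by simp
  also have "\<dots> = (state_code (True, s1), int i + 1, (tape_of (?ys @ drop i xs))(int i := written_symbol (xs ! i) c1))"
    using IH(2) tv g by (simp add: sweep_tm_def)
  also have "\<dots> = (state_code (True, s1), int (Suc i), tape_of ((?ys @ [written_symbol (xs ! i) c1]) @ drop (Suc i) xs))"
    using tape_of_update[OF ly il] by simp
  finally show ?case
    using Rc by (auto simp: tk sweep_append Let_def)
qed

lemma run_backward:
  assumes nz: "\<forall>c\<in>set ys. c \<noteq> 0" and q: "q \<noteq> 1" "q \<noteq> 2" "decode_state st0 q = (False, st)"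
  shows "j \<le> length ys \<Longrightarrow> (sweep_step R E st0 ^^ j) (q, int (length ys) - 1, tape_of ys) =
     (q, int (length ys) - 1 - int j, tape_of ys)"
proof (induction j)
  case 0
  then show ?case by simp
next
  case (Suc j)
  let ?h = "int (length ys) - 1 - int j"
  have h: "?h = int (length ys - 1 - j)" "length ys - 1 - j < length ys" using Suc by auto
  have tv: "tape_of ys ?h = ys ! (length ys - 1 - j)" unfolding h(1) by (rule tape_of_nth[OF h(2)])
  have nzi: "ys ! (length ys - 1 - j) \<noteq> 0" using nz h by auto
  have upd: "(tape_of ys)(?h := ys ! (length ys - 1 - j)) = tape_of ys" using tv by (metis fun_upd_triv)
  have g: "sweep_delta R E st0 q (ys ! (length ys - 1 - j)) = (q, ys ! (length ys - 1 - j), -1)"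
    using q nzi by (simp add: sweep_delta_def)
  have "(sweep_step R E st0 ^^ Suc j) (q, int (length ys) - 1, tape_of ys) = sweep_step R E st0 (q, ?h, tape_of ys)"
    using Suc by simp
  also have "\<dots> = (q, ?h + -1, tape_of ys)"
    using q(1) tv g upd by (simp add: sweep_tm_def)
  finally show ?case by simp
qed

lemma run_sweep_then_decide:
  assumes nz: "\<forall>c\<in>set xs. c \<noteq> 0" and q: "q \<noteq> 1" "q \<noteq> 2" "decode_state st0 q = (True, st)"
  shows "(sweep_step R E st0 ^^ Suc (length xs)) (q, 0, tape_of xs) =
     (case E (fst (sweep R st xs)) of Accept \<Rightarrow> (1, int (length xs), tape_of (snd (sweep R st xs)))
       | Reject \<Rightarrow> (2, int (length xs), tape_of (snd (sweep R st xs)))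
       | Continue s \<Rightarrow> (state_code (False, s), int (length xs) - 1, tape_of (snd (sweep R st xs))))"
proof -
  obtain q' where S: "(sweep_step R E st0 ^^ length xs) (q, 0, tape_of xs) =
     (q', int (length xs), tape_of (snd (sweep R st xs)))" "q' \<noteq> 1" "q' \<noteq> 2"
     "decode_state st0 q' = (True, fst (sweep R st xs))"
    using run_forward[OF nz q, of "length xs" R E] by auto
  have t0: "tape_of (snd (sweep R st xs)) (int (length xs)) = 0"
    by (simp add: tape_of_def sweep_length)
  have upd: "(tape_of (snd (sweep R st xs)))(int (length xs) := 0) = tape_of (snd (sweep R st xs))"
    using t0 by (metis fun_upd_triv)
  have "(sweep_step R E st0 ^^ Suc (length xs)) (q, 0, tape_of xs) = sweep_step R E st0 (q', int (length xs), tape_of (snd (sweep R st xs)))"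
    using S(1) by simp
  then show ?thesis using S(2,3,4) t0 upd
    by (simp add: sweep_tm_def sweep_delta_def split: verdict.splits)
qed

lemma run_round:
  assumes nz: "\<forall>c\<in>set xs. c \<noteq> 0" and ne: "xs \<noteq> []" and q: "q \<noteq> 1" "q \<noteq> 2" "decode_state st0 q = (True, st)"
    and E: "E (fst (sweep R st xs)) = Continue s"
  shows "(sweep_step R E st0 ^^ (2 * length xs + 2)) (q, 0, tape_of xs) = (state_code (True, s), 0, tape_of (snd (sweep R st xs)))"
    and "\<And>j. j \<le> length xs \<Longrightarrow> (sweep_step R E st0 ^^ (Suc (length xs) + j)) (q, 0, tape_of xs) =
       (state_code (False, s), int (length xs) - 1 - int j, tape_of (snd (sweep R st xs)))"
proof -
  let ?ys = "snd (sweep R st xs)"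
  have nzy: "\<forall>c\<in>set ?ys. c \<noteq> 0" by (rule sweep_nz[OF nz])
  have ly: "length ?ys = length xs" by (simp add: sweep_length)
  have F: "(sweep_step R E st0 ^^ Suc (length xs)) (q, 0, tape_of xs) = (state_code (False, s), int (length xs) - 1, tape_of ?ys)"
    using run_sweep_then_decide[OF nz q, of R E] unfolding E verdict.case .
  show B: "\<And>j. j \<le> length xs \<Longrightarrow> (sweep_step R E st0 ^^ (Suc (length xs) + j)) (q, 0, tape_of xs) =
       (state_code (False, s), int (length xs) - 1 - int j, tape_of ?ys)"
  proof -
    fix j assume j: "j \<le> length xs"
    have e1: "(sweep_step R E st0 ^^ (Suc (length xs) + j)) (q, 0, tape_of xs) =
      (sweep_step R E st0 ^^ j) ((sweep_step R E st0 ^^ Suc (length xs)) (q, 0, tape_of xs))"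
      by (simp only: add.commute[of "Suc (length xs)" j] funpow_add_apply)
    have bs: "(sweep_step R E st0 ^^ j) (state_code (False, s), int (length ?ys) - 1, tape_of ?ys) =
       (state_code (False, s), int (length ?ys) - 1 - int j, tape_of ?ys)"
      by (rule run_backward[OF nzy]) (auto simp: j ly)
    show "(sweep_step R E st0 ^^ (Suc (length xs) + j)) (q, 0, tape_of xs) =
       (state_code (False, s), int (length xs) - 1 - int j, tape_of ?ys)"
      unfolding e1 F using bs unfolding ly .
  qed
  have t0: "tape_of ?ys (-1) = 0" by (simp add: tape_of_def)
  have eq2: "2 * length xs + 2 = Suc (Suc (length xs) + length xs)" by simp
  have upd: "(tape_of ?ys)(-1 := 0) = tape_of ?ys" using t0 by (metis fun_upd_triv)
  have "(sweep_step R E st0 ^^ (2 * length xs + 2)) (q, 0, tape_of xs) =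
     sweep_step R E st0 ((sweep_step R E st0 ^^ (Suc (length xs) + length xs)) (q, 0, tape_of xs))"
    by (simp only: eq2 funpow.simps comp_apply)
  also have "\<dots> = (state_code (True, s), 0, tape_of ?ys)"
    using B[of "length xs"] t0 upd by (simp add: sweep_tm_def sweep_delta_def)
  finally show "(sweep_step R E st0 ^^ (2 * length xs + 2)) (q, 0, tape_of xs) = (state_code (True, s), 0, tape_of ?ys)" .
qed

fun sweeps_accept :: "('a \<Rightarrow> nat \<Rightarrow> 'a \<times> nat) \<Rightarrow> ('a \<Rightarrow> 'a verdict) \<Rightarrow> nat \<Rightarrow> 'a \<Rightarrow> nat list \<Rightarrow> bool" where
  "sweeps_accept R E 0 st xs = False"
| "sweeps_accept R E (Suc N) st xs = (case E (fst (sweep R st xs)) of Accept \<Rightarrow> True | Reject \<Rightarrow> False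
     | Continue s \<Rightarrow> sweeps_accept R E N s (snd (sweep R st xs)))"

lemma run_accepts_if_sweeps_accept:
  "sweeps_accept R E N st xs \<Longrightarrow> \<forall>c\<in>set xs. c \<noteq> 0 \<Longrightarrow> xs \<noteq> [] \<Longrightarrow> q \<noteq> 1 \<Longrightarrow> q \<noteq> 2 \<Longrightarrow>
   decode_state st0 q = (True, st) \<Longrightarrow> fst ((sweep_step R E st0 ^^ (N * (2 * length xs + 2))) (q, 0, tape_of xs)) = 1"
proof (induction N arbitrary: q st xs)
  case 0
  then show ?case by simp
next
  case (Suc N)
  note q = Suc.prems(4,5,6)
  show ?case
  proof (cases "E (fst (sweep R st xs))")
    case Accept
    have F: "(sweep_step R E st0 ^^ Suc (length xs)) (q, 0, tape_of xs) = (1, int (length xs), tape_of (snd (sweep R st xs)))"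
      using run_sweep_then_decide[where R=R and E=E and ?st0.0=st0, OF Suc.prems(2) q] unfolding Accept verdict.case .
    have e: "Suc N * (2 * length xs + 2) = (N * (2 * length xs + 2) + length xs + 1) + Suc (length xs)" by simp
    have sp: "(sweep_step R E st0 ^^ (Suc N * (2 * length xs + 2))) (q, 0, tape_of xs) =
      (sweep_step R E st0 ^^ (N * (2 * length xs + 2) + length xs + 1)) ((sweep_step R E st0 ^^ Suc (length xs)) (q, 0, tape_of xs))"
      unfolding e by (rule funpow_add_apply)
    show ?thesis unfolding sp F accept_state_fixed by simp
  next
    case Reject
    then show ?thesis using Suc.prems(1) by simp
  next
    case (Continue s)
    let ?ys = "snd (sweep R st xs)"
    have F: "(sweep_step R E st0 ^^ (2 * length xs + 2)) (q, 0, tape_of xs) = (state_code (True, s), 0, tape_of ?ys)"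
      using run_round(1)[where R=R and E=E and ?st0.0=st0, OF Suc.prems(2,3) q Continue] .
    have r: "sweeps_accept R E N s ?ys" using Suc.prems(1) Continue by simp
    have ly: "length ?ys = length xs" by (simp add: sweep_length)
    have IH: "fst ((sweep_step R E st0 ^^ (N * (2 * length ?ys + 2))) (state_code (True, s), 0, tape_of ?ys)) = 1"
    proof -
      have nzy: "\<forall>c\<in>set ?ys. c \<noteq> 0" by (rule sweep_nz[OF Suc.prems(2)])
      have ney: "?ys \<noteq> []" using ly Suc.prems(3) by auto
      show ?thesis by (rule Suc.IH[OF r nzy ney]) simp_all
    qed
    have e: "Suc N * (2 * length xs + 2) = N * (2 * length xs + 2) + (2 * length xs + 2)" by simp
    have sp: "(sweep_step R E st0 ^^ (Suc N * (2 * length xs + 2))) (q, 0, tape_of xs) =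
      (sweep_step R E st0 ^^ (N * (2 * length xs + 2))) ((sweep_step R E st0 ^^ (2 * length xs + 2)) (q, 0, tape_of xs))"
      unfolding e by (rule funpow_add_apply)
    show ?thesis unfolding sp F using IH unfolding ly .
  qed
qed

lemma run_not_halted_during_sweep:
  assumes "\<forall>c\<in>set xs. c \<noteq> 0" "q \<noteq> 1" "q \<noteq> 2" "decode_state st0 q = (True, st)" and "t \<le> length xs"
  shows "fst ((sweep_step R E st0 ^^ t) (q, 0, tape_of xs)) \<noteq> 1"
  using run_forward[where R=R and E=E, OF assms] by auto

lemma run_not_accepted_if_Reject:
  assumes nz: "\<forall>c\<in>set xs. c \<noteq> 0" and q: "q \<noteq> 1" "q \<noteq> 2" "decode_state st0 q = (True, st)"
    and "E (fst (sweep R st xs)) = Reject"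
  shows "fst ((sweep_step R E st0 ^^ t) (q, 0, tape_of xs)) \<noteq> 1"
proof (cases "t \<le> length xs")
  case False
  define d where "d = t - Suc (length xs)"
  have t: "t = d + Suc (length xs)"
    using False by (simp add: d_def)
  have "(sweep_step R E st0 ^^ Suc (length xs)) (q, 0, tape_of xs) = (2, int (length xs), tape_of (snd (sweep R st xs)))"
    using run_sweep_then_decide[where R=R and E=E, OF nz q] assms(5) by simp
  then show ?thesis
    unfolding t funpow_add_apply by (simp add: reject_state_fixed)
qed (rule run_not_halted_during_sweep[OF nz q])

lemma run_accepted_after_round_if_Continue:
  assumes nz: "\<forall>c\<in>set xs. c \<noteq> 0" and ne: "xs \<noteq> []" and q: "q \<noteq> 1" "q \<noteq> 2" "decode_state st0 q = (True, st)"
    and cont: "E (fst (sweep R st xs)) = Continue s"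
    and acc: "fst ((sweep_step R E st0 ^^ t) (q, 0, tape_of xs)) = 1"
  obtains d where "t = d + (2 * length xs + 2)"
    and "fst ((sweep_step R E st0 ^^ d) (state_code (True, s), 0, tape_of (snd (sweep R st xs)))) = 1"
proof -
  have "\<not> t \<le> length xs"
    using run_not_halted_during_sweep[OF nz q] acc by blast
  moreover have "\<not> t < 2 * length xs + 2"
  proof
    assume "t < 2 * length xs + 2"
    then have "t = Suc (length xs) + (t - Suc (length xs))" "t - Suc (length xs) \<le> length xs"
      using \<open>\<not> t \<le> length xs\<close> by simp_all
    then show False
      using run_round(2)[where R=R and E=E, OF nz ne q cont, of "t - Suc (length xs)"] acc by simp
  qed
  ultimately have t: "t = (t - (2 * length xs + 2)) + (2 * length xs + 2)"
    by simp
  show ?thesis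
    by (rule that[OF t]) (use acc run_round(1)[where R=R and E=E, OF nz ne q cont] in \<open>metis t funpow_add_apply\<close>)
qed

lemma sweeps_accept_if_run_accepts:
  "fst ((sweep_step R E st0 ^^ t) (q, 0, tape_of xs)) = 1 \<Longrightarrow> \<forall>c\<in>set xs. c \<noteq> 0 \<Longrightarrow> xs \<noteq> [] \<Longrightarrow> q \<noteq> 1 \<Longrightarrow> q \<noteq> 2 \<Longrightarrow>
   decode_state st0 q = (True, st) \<Longrightarrow> \<exists>N. sweeps_accept R E N st xs"
proof (induction t arbitrary: q st xs rule: less_induct)
  case (less t)
  note acc = less.prems(1) and nz = less.prems(2) and ne = less.prems(3) and q = less.prems(4,5,6)
  show ?case
  proof (cases "E (fst (sweep R st xs))")
    case Accept
    then have "sweeps_accept R E 1 st xs" by simp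
    then show ?thesis by blast
  next
    case Reject
    then show ?thesis
      using run_not_accepted_if_Reject[OF nz q] acc by blast
  next
    case (Continue s)
    let ?ys = "snd (sweep R st xs)"
    obtain d where "t = d + (2 * length xs + 2)"
      and "fst ((sweep_step R E st0 ^^ d) (state_code (True, s), 0, tape_of ?ys)) = 1"
      using run_accepted_after_round_if_Continue[OF nz ne q Continue acc] .
    moreover have "\<forall>c\<in>set ?ys. c \<noteq> 0"
      by (rule sweep_nz[OF nz])
    moreover have "?ys \<noteq> []"
      using sweep_length[of R st xs] ne by auto
    ultimately obtain N where "sweeps_accept R E N s ?ys"
      using less.IH[of d "state_code (True, s)" ?ys s] by (auto simp del: sweeps_accept.simps)
    then have "sweeps_accept R E (Suc N) st xs"
      using Continue by simp
    then show ?thesis by blast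
  qed
qed

lemma sweeps_accept_mono:
  "sweeps_accept R E N st xs \<Longrightarrow> N \<le> N' \<Longrightarrow> sweeps_accept R E N' st xs"
proof (induction N arbitrary: N' st xs)
  case (Suc N)
  then obtain M where "N' = Suc M" "N \<le> M" by (cases N') auto
  then show ?case using Suc by (auto split: verdict.splits)
qed simp

lemma accepts_within_mono:
  assumes "accepts_within M x t" and "t \<le> T"
  shows "accepts_within M x T"
proof -
  have halted: "(tm_step M ^^ n) (1, h, tp) = (1, h, tp)" for n h tp
    by (induction n) auto
  obtain h tp where "(tm_step M ^^ t) (tm_init x) = (1, h, tp)"
    using assms(1) unfolding accepts_within_def by (metis prod.collapse)
  moreover have "(tm_step M ^^ T) (tm_init x) = (tm_step M ^^ (T - t)) ((tm_step M ^^ t) (tm_init x))"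
    using assms(2) funpow_add_apply[where f="tm_step M" and a="T - t" and b=t] by simp
  ultimately show ?thesis
    unfolding accepts_within_def by (metis halted fst_conv)
qed

lemma tm_init_tape_of: "tm_init xs = (0, 0, tape_of xs)"
  by (simp add: tm_init_def tape_of_def)

lemma sweep_tm_accepts_if_sweeps_accept:
  assumes "sweeps_accept R E N st0 xs" and "\<forall>c\<in>set xs. c \<noteq> 0" and "xs \<noteq> []"
  shows "accepts_within (sweep_tm R E st0) xs (N * (2 * length xs + 2))"
  unfolding accepts_within_def tm_init_tape_of
  by (rule run_accepts_if_sweeps_accept[OF assms]) (simp_all add: decode_state_def)

lemma sweeps_accept_if_sweep_tm_accepts:
  assumes "accepts_within (sweep_tm R E st0) xs t" and "\<forall>c\<in>set xs. c \<noteq> 0" and "xs \<noteq> []"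
  shows "\<exists>N. sweeps_accept R E N st0 xs"
  using assms unfolding accepts_within_def tm_init_tape_of
  by (intro sweeps_accept_if_run_accepts[where q=0]) (simp_all add: decode_state_def)

section \<open>Separating formulas as sets of tested positions\<close>

fun constraints :: "ltl \<Rightarrow> (nat \<times> letter) set" where
  "constraints (Lit c) = {(0, c)}"
| "constraints (Conj f g) = constraints f \<union> constraints g"
| "constraints (Nxt f) = (\<lambda>(q, c). (Suc q, c)) ` constraints f"

lemma finite_constraints: "finite (constraints f)"
  by (induction f) auto

lemma constraints_nonempty: "constraints f \<noteq> {}"
  by (induction f) auto

lemma holds_iff_constraints:
  "holds w (Suc p) f \<longleftrightarrow> (\<forall>(q, c)\<in>constraints f. p + q < length w \<and> w ! (p + q) = c)"
proof (induction f arbitrary: p)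
  case (Conj f g)
  then show ?case by (simp add: ball_Un)
next
  case (Nxt f)
  obtain q c where "(q, c) \<in> constraints f"
    using constraints_nonempty by fast
  then have "(\<forall>(q, c)\<in>constraints f. Suc p + q < length w \<and> w ! (Suc p + q) = c) \<Longrightarrow> Suc p < length w"
    by fastforce
  then show ?case using Nxt[of "Suc p"] by auto
qed auto

lemma models_iff_constraints:
  "models w f \<longleftrightarrow> (\<forall>(q, c)\<in>constraints f. q < length w \<and> w ! q = c)"
  unfolding models_def using holds_iff_constraints[of w 0 f] by simp

lemma fsize_ge_constraint_positions:
  "Max (fst ` constraints f) + 2 * card (fst ` constraints f) \<le> fsize f + 1"
proof (induction f)
  case (Conj f g)
  let ?A = "fst ` constraints f" and ?B = "fst ` constraints g"
  have "finite ?A" "?A \<noteq> {}" "finite ?B" "?B \<noteq> {}"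
    using finite_constraints constraints_nonempty by auto
  then have "Max (?A \<union> ?B) = max (Max ?A) (Max ?B)"
    by (simp add: Max_Un)
  moreover have "fst ` constraints (Conj f g) = ?A \<union> ?B" by auto
  ultimately show ?case
    using card_Un_le[of ?A ?B] Conj.IH by simp
next
  case (Nxt f)
  let ?A = "fst ` constraints f"
  have "finite ?A" "?A \<noteq> {}"
    using finite_constraints constraints_nonempty by auto
  then have "Max (Suc ` ?A) = Suc (Max ?A)"
    by (simp add: mono_Max_commute[symmetric] mono_Suc)
  moreover have "fst ` constraints (Nxt f) = Suc ` ?A" by force
  ultimately show ?case
    using Nxt.IH by (simp add: card_image)
qed simp

text \<open>Pairs are used so that the length of a
  certificate bounds the size of the formula it describes, each tested position but the last
  costing a conjunction and a literal.\<close>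

datatype instr = Adv | Tst

fun well_formed :: "instr list \<Rightarrow> bool" where
  "well_formed [] = True"
| "well_formed (Adv # r) = well_formed r"
| "well_formed (Tst # Tst # r) = well_formed r"
| "well_formed _ = False"

fun tested_positions :: "nat \<Rightarrow> instr list \<Rightarrow> nat set" where
  "tested_positions p [] = {}"
| "tested_positions p (Adv # r) = tested_positions (Suc p) r"
| "tested_positions p (Tst # r) = insert p (tested_positions p r)"

fun formula_of :: "(nat \<Rightarrow> letter) \<Rightarrow> nat \<Rightarrow> instr list \<Rightarrow> ltl" where
  "formula_of L p (Adv # r) = Nxt (formula_of L (Suc p) r)"
| "formula_of L p (Tst # Tst # r) =
     (if Tst \<in> set r then Conj (Lit (L p)) (formula_of L p r) else Lit (L p))"
| "formula_of L p _ = Lit La"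

lemma well_formed_append:
  "well_formed xs \<Longrightarrow> well_formed ys \<Longrightarrow> well_formed (xs @ ys)"
  by (induction xs rule: well_formed.induct) auto

lemma well_formed_Tst_Cons:
  "well_formed (Tst # xs) \<longleftrightarrow> (\<exists>xs'. xs = Tst # xs' \<and> well_formed xs')"
  by (cases xs rule: well_formed.cases) auto

lemma tested_positions_ge: "q \<in> tested_positions p r \<Longrightarrow> p \<le> q"
  by (induction p r rule: tested_positions.induct) auto

lemma tested_positions_empty_iff:
  "tested_positions p r = {} \<longleftrightarrow> Tst \<notin> set r"
  by (induction p r rule: tested_positions.induct) auto

lemma tested_positions_append:
  "tested_positions p (xs @ ys) = tested_positions p xs \<union> tested_positions (p + length (filter ((=) Adv) xs)) ys"
  by (induction p xs rule: tested_positions.induct) auto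

lemma fsize_formula_of:
  "well_formed ops \<Longrightarrow> Tst \<in> set ops \<Longrightarrow> fsize (formula_of L p ops) < length ops"
  by (induction L p ops rule: formula_of.induct) auto

lemma holds_formula_of:
  "well_formed ops \<Longrightarrow> Tst \<in> set ops \<Longrightarrow>
   holds w (Suc p) (formula_of L p ops) \<longleftrightarrow> (\<forall>q\<in>tested_positions p ops. q < length w \<and> w ! q = L q)"
proof (induction L p ops rule: formula_of.induct)
  case (1 L p r)
  obtain q where "q \<in> tested_positions (Suc p) r"
    using 1 tested_positions_empty_iff[of "Suc p" r] by auto
  then have "(\<forall>q\<in>tested_positions (Suc p) r. q < length w \<and> w ! q = L q) \<Longrightarrow> Suc p < length w"
    using tested_positions_ge[of q "Suc p" r] by force
  then show ?case using 1 by auto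
next
  case (2 L p r)
  then show ?case
    using tested_positions_empty_iff[of p r] by (cases "Tst \<in> set r") auto
qed auto

definition mismatch :: "letter \<Rightarrow> nat \<Rightarrow> letter list \<Rightarrow> bool" where
  "mismatch l q v \<longleftrightarrow> \<not> (q < length v \<and> v ! q = l)"

lemma separates_formula_of:
  assumes "well_formed ops" and "Tst \<in> set ops"
    and "\<forall>q\<in>tested_positions 0 ops. \<forall>u\<in>set us. q < length u \<and> u ! q = L q"
    and "\<forall>v\<in>set vs. \<exists>q\<in>tested_positions 0 ops. mismatch (L q) q v"
  shows "separates (formula_of L 0 ops) us vs"
proof -
  have "models w (formula_of L 0 ops) \<longleftrightarrow> (\<forall>q\<in>tested_positions 0 ops. q < length w \<and> w ! q = L q)" for w
    unfolding models_def using holds_formula_of[OF assms(1,2), of w 0 L] by simp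
  then show ?thesis
    using assms(3,4) unfolding separates_def mismatch_def by blast
qed

fun instrs_testing :: "nat set \<Rightarrow> nat \<Rightarrow> instr list" where
  "instrs_testing P 0 = (if 0 \<in> P then [Tst, Tst] else [])"
| "instrs_testing P (Suc n) = instrs_testing P n @ Adv # (if Suc n \<in> P then [Tst, Tst] else [])"

lemma well_formed_instrs_testing: "well_formed (instrs_testing P n)"
  by (induction n) (auto intro!: well_formed_append)

lemma count_Adv_instrs_testing: "length (filter ((=) Adv) (instrs_testing P n)) = n"
  by (induction n) auto

lemma tested_positions_instrs_testing: "tested_positions 0 (instrs_testing P n) = P \<inter> {..n}"
proof (induction n)
  case (Suc n)
  have "tested_positions 0 (instrs_testing P (Suc n))
      = P \<inter> {..n} \<union> tested_positions (Suc n) (if Suc n \<in> P then [Tst, Tst] else [])"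
    using Suc by (simp add: tested_positions_append count_Adv_instrs_testing)
  then show ?case by (auto simp: le_Suc_eq)
qed auto

lemma length_instrs_testing: "length (instrs_testing P n) = n + 2 * card (P \<inter> {..n})"
proof (induction n)
  case 0
  have "P \<inter> {..0} = (if 0 \<in> P then {0} else {})" by auto
  then show ?case by simp
next
  case (Suc n)
  have "P \<inter> {..Suc n} = (if Suc n \<in> P then insert (Suc n) (P \<inter> {..n}) else P \<inter> {..n})"
    by (auto simp: le_Suc_eq)
  then show ?case using Suc by (simp del: instrs_testing.simps(1) add: instrs_testing.simps(2))
qed

lemma certificate_of_separator:
  assumes sep: "separates f us vs" and u: "u \<in> set us"
  obtains ops where "well_formed ops" "Tst \<in> set ops" "length ops \<le> fsize f + 1" "length ops \<le> 3 * length u"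
    "\<forall>q\<in>tested_positions 0 ops. \<forall>u'\<in>set us. q < length u' \<and> u' ! q = u ! q"
    "\<forall>v\<in>set vs. \<exists>q\<in>tested_positions 0 ops. mismatch (u ! q) q v"
proof
  define P where "P = fst ` constraints f"
  define ops where "ops = instrs_testing P (Max P)"
  have P: "finite P" "P \<noteq> {}"
    using finite_constraints constraints_nonempty by (auto simp: P_def)
  have tested: "tested_positions 0 ops = P"
    using P by (auto simp: ops_def tested_positions_instrs_testing)
  have at_u: "q < length u \<and> u ! q = c" if "(q, c) \<in> constraints f" for q c
    using sep u that unfolding separates_def models_iff_constraints by fast
  show "well_formed ops"
    by (simp add: ops_def well_formed_instrs_testing)
  show "Tst \<in> set ops"
    using tested P tested_positions_empty_iff by blast
  have len: "length ops = Max P + 2 * card P"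
    using P by (simp add: ops_def length_instrs_testing Int_absorb2 subsetI)
  then show "length ops \<le> fsize f + 1"
    using fsize_ge_constraint_positions[of f] by (simp add: P_def)
  have "P \<subseteq> {..<length u}"
    using at_u by (auto simp: P_def)
  then have "card P \<le> length u" "Max P < length u"
    using P card_mono[of "{..<length u}" P] by auto
  then show "length ops \<le> 3 * length u"
    using len by simp
  show "\<forall>q\<in>tested_positions 0 ops. \<forall>u'\<in>set us. q < length u' \<and> u' ! q = u ! q"
    using sep at_u unfolding tested P_def separates_def models_iff_constraints by fastforce
  show "\<forall>v\<in>set vs. \<exists>q\<in>tested_positions 0 ops. mismatch (u ! q) q v"
    using sep at_u unfolding tested P_def separates_def models_iff_constraints mismatch_def by fastforce
qed

section \<open>The verifier\<close>

text \<open>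
  Tape symbols: 1 and 2 are the letters a and b, and in the certificate the instructions Adv and
  Tst; 3 ends a word; 4 separates the positive words, the negative words and the binary digits
  5 (zero) and 6 (one) of k, least significant first; 7 precedes the certificate. Adding 8 to a
  letter marks it as lying left of the cursor, and adding 8 to an instruction marks it as read;
  a word end becomes 11 once the word is counted, and 27 in a negative word already rejected.

  In state Match, every sweep counts one
  positive and one negative word. In state Eval every sweep executes one instruction and reads
  the next one; its fields are the segment of the tape, the instruction, whether to decrement
  the counter (for every instruction but the first), the cursor status in the current word, the
  letter of the positive words at the cursor, a failure flag, whether all negative words are
  rejected, the borrow of the decrement, and the next instruction.
\<close>

datatype segment = SU | SV | SK | SC

datatype syntax_state = U0 | U1 | V0 | V1 | Kz | Kn | Ca | Ch | Cb | Err

datatype cursor = Seek | Passed | Failed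

datatype vstate = Syntax syntax_state | Match segment bool bool
  | Eval segment "instr option" bool cursor "letter option" bool bool bool "instr option"

instance letter :: countable by countable_datatype

instance segment :: countable by countable_datatype

instance syntax_state :: countable by countable_datatype

instance instr :: countable by countable_datatype

instance cursor :: countable by countable_datatype

instance vstate :: countable by countable_datatype

instance letter :: finite
proof
  have "UNIV = {La, Lb}" using letter.exhaust by auto
  then show "finite (UNIV :: letter set)" by (metis finite.emptyI finite.insertI)
qed

instance segment :: finite
proof
  have "UNIV = {SU, SV, SK, SC}" using segment.exhaust by auto
  then show "finite (UNIV :: segment set)" by (metis finite.emptyI finite.insertI)
qed

instance syntax_state :: finite
proof
  have "UNIV = {U0, U1, V0, V1, Kz, Kn, Ca, Ch, Cb, Err}" using syntax_state.exhaust by auto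
  then show "finite (UNIV :: syntax_state set)" by (metis finite.emptyI finite.insertI)
qed

instance instr :: finite
proof
  have "UNIV = {Adv, Tst}" using instr.exhaust by auto
  then show "finite (UNIV :: instr set)" by (metis finite.emptyI finite.insertI)
qed

instance cursor :: finite
proof
  have "UNIV = {Seek, Passed, Failed}" using cursor.exhaust by auto
  then show "finite (UNIV :: cursor set)" by (metis finite.emptyI finite.insertI)
qed

instance vstate :: finite
proof
  have "UNIV = range Syntax \<union> (\<lambda>(a,b,c). Match a b c) ` UNIV \<union>
     (\<lambda>(a,b,c,d,e,f,g,h,i). Eval a b c d e f g h i) ` UNIV"
  proof (rule set_eqI)
    fix x :: vstate show "x \<in> UNIV \<longleftrightarrow> x \<in> range Syntax \<union> (\<lambda>(a,b,c). Match a b c) ` UNIV \<union>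
     (\<lambda>(a,b,c,d,e,f,g,h,i). Eval a b c d e f g h i) ` UNIV"
    proof (cases x)
      case (Match a b c) then show ?thesis by (auto intro!: image_eqI[where x="(a,b,c)"])
    next
      case (Eval a b c d e f g h i) then show ?thesis by (auto intro!: image_eqI[where x="(a,b,c,d,e,f,g,h,i)"])
    qed auto
  qed
  then show "finite (UNIV :: vstate set)" by (metis finite_Un finite_UNIV finite_imageI)
qed

text \<open>In syntax_dfa, the states U0, U1 (V0, V1) lie between and inside positive (negative) words;
  Kz and Kn mean that the binary digits read so far are empty or end with a one, resp. end with
  a zero (enc_bin has no leading zeros); Ca, Cb and Ch lie in the certificate before the first
  Tst, after a pair Tst Tst, and inside such a pair.\<close>

fun syntax_dfa :: "syntax_state \<Rightarrow> nat \<Rightarrow> syntax_state" where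
  "syntax_dfa U0 c = (if c = 1 \<or> c = 2 then U1 else if c = 4 then V0 else Err)"
| "syntax_dfa U1 c = (if c = 1 \<or> c = 2 then U1 else if c = 3 then U0 else Err)"
| "syntax_dfa V0 c = (if c = 1 \<or> c = 2 then V1 else if c = 4 then Kz else Err)"
| "syntax_dfa V1 c = (if c = 1 \<or> c = 2 then V1 else if c = 3 then V0 else Err)"
| "syntax_dfa Kz c = (if c = 5 then Kn else if c = 6 then Kz else if c = 7 then Ca else Err)"
| "syntax_dfa Kn c = (if c = 5 then Kn else if c = 6 then Kz else Err)"
| "syntax_dfa Ca c = (if c = 1 then Ca else if c = 2 then Ch else Err)"
| "syntax_dfa Ch c = (if c = 2 then Cb else Err)"
| "syntax_dfa Cb c = (if c = 1 then Cb else if c = 2 then Ch else Err)"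
| "syntax_dfa Err c = Err"

fun next_segment :: "segment \<Rightarrow> segment" where
  "next_segment SU = SV" | "next_segment SV = SK" | "next_segment SK = SK" | "next_segment SC = SC"

definition chosen_letter :: "letter option \<Rightarrow> letter" where
  "chosen_letter lt = (case lt of None \<Rightarrow> La | Some l \<Rightarrow> l)"

definition letter_of_code :: "nat \<Rightarrow> letter" where "letter_of_code c = (if c = 1 then La else Lb)"

definition instr_of_code :: "nat \<Rightarrow> instr" where "instr_of_code c = (if c = 1 then Adv else Tst)"

fun code_of_instr :: "instr \<Rightarrow> nat" where
  "code_of_instr Adv = 1"
| "code_of_instr Tst = 2"

fun eval_word_step :: "segment \<Rightarrow> instr option \<Rightarrow> bool \<Rightarrow> cursor \<Rightarrow> letter option \<Rightarrow> bool \<Rightarrow> bool \<Rightarrow> bool \<Rightarrow> instr option \<Rightarrow> nat \<Rightarrow> vstate \<times> nat" where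
  "eval_word_step sec op dec w lt fl ar bor nb c =
   (if c = 4 then (if sec = SU then (Eval SV op dec w lt fl ar bor nb, c)
                   else (Eval SK op dec w lt fl ar (op \<noteq> None \<and> dec) nb, c))
    else if c = 1 \<or> c = 2 then
      (if w \<noteq> Seek then (Eval sec op dec w lt fl ar bor nb, c) else
       (case op of None \<Rightarrow> (Eval sec op dec Passed lt fl ar bor nb, c)
        | Some Adv \<Rightarrow> (Eval sec op dec Passed lt fl ar bor nb, c + 8)
        | Some Tst \<Rightarrow> (if sec = SU then
             (case lt of None \<Rightarrow> (Eval sec op dec Passed (Some (letter_of_code c)) fl ar bor nb, c)
              | Some l \<Rightarrow> (Eval sec op dec Passed lt (fl \<or> enc_letter l \<noteq> c) ar bor nb, c))
            else (Eval sec op dec (if c = enc_letter (chosen_letter lt) then Passed else Failed) lt fl ar bor nb, c))))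
    else if c = 11 \<or> c = 27 then
      (if sec = SU then (Eval sec op dec Seek lt (fl \<or> (op = Some Tst \<and> w = Seek)) ar bor nb, c)
       else (let rj = (c = 27 \<or> w = Failed \<or> (op = Some Tst \<and> w = Seek)) in
             (Eval sec op dec Seek lt fl (ar \<and> rj) bor nb, if rj then 27 else c)))
    else (Eval sec op dec w lt fl ar bor nb, c))"

fun eval_step :: "segment \<Rightarrow> instr option \<Rightarrow> bool \<Rightarrow> cursor \<Rightarrow> letter option \<Rightarrow> bool \<Rightarrow> bool \<Rightarrow> bool \<Rightarrow> instr option \<Rightarrow> nat \<Rightarrow> vstate \<times> nat" where
  "eval_step SK op dec w lt fl ar bor nb c =
     (if c = 5 then (Eval SK op dec w lt fl ar bor nb, if bor then 6 else 5)
      else if c = 6 then (if bor then (Eval SK op dec w lt fl ar False nb, 5) else (Eval SK op dec w lt fl ar bor nb, 6))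
      else if c = 7 then (Eval SC op dec w lt (fl \<or> bor) ar bor nb, c)
      else (Eval SK op dec w lt fl ar bor nb, c))"
| "eval_step SC op dec w lt fl ar bor nb c =
     (if (c = 1 \<or> c = 2) \<and> nb = None then (Eval SC op dec w lt fl ar bor (Some (instr_of_code c)), c + 8)
      else (Eval SC op dec w lt fl ar bor nb, c))"
| "eval_step SU op dec w lt fl ar bor nb c = eval_word_step SU op dec w lt fl ar bor nb c"
| "eval_step SV op dec w lt fl ar bor nb c = eval_word_step SV op dec w lt fl ar bor nb c"

fun verifier_step :: "vstate \<Rightarrow> nat \<Rightarrow> vstate \<times> nat" where
  "verifier_step (Syntax q) c = (Syntax (syntax_dfa q c), c)"
| "verifier_step (Match sec fu fv) c = (if c = 4 then (Match (next_segment sec) fu fv, c)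
     else if c = 3 \<and> sec = SU \<and> \<not> fu then (Match sec True fv, 11)
     else if c = 3 \<and> sec = SV \<and> \<not> fv then (Match sec fu True, 11)
     else (Match sec fu fv, c))"
| "verifier_step (Eval sec op dec w lt fl ar bor nb) c = eval_step sec op dec w lt fl ar bor nb c"

definition eval_start :: "instr option \<Rightarrow> bool \<Rightarrow> vstate" where
  "eval_start op dec = Eval SU op dec Seek None False True False None"

fun verifier_verdict :: "vstate \<Rightarrow> vstate verdict" where
  "verifier_verdict (Syntax q) = (if q = Cb then Continue (Match SU False False) else Reject)"
| "verifier_verdict (Match sec fu fv) = (if fu \<noteq> fv then Reject else if fu then Continue (Match SU False False) else Continue (eval_start None False))"
| "verifier_verdict (Eval sec op dec w lt fl ar bor nb) = (if fl then Reject else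
     (case op of None \<Rightarrow> (case nb of None \<Rightarrow> Reject | Some x \<Rightarrow> Continue (eval_start (Some x) False))
      | Some _ \<Rightarrow> (case nb of None \<Rightarrow> (if ar then Accept else Reject) | Some x \<Rightarrow> Continue (eval_start (Some x) True))))"

definition verifier_tm :: tm where
  "verifier_tm = sweep_tm verifier_step verifier_verdict (Syntax U0)"

lemma written_symbol_same[simp]: "written_symbol c c = c" by (simp add: written_symbol_def)

lemma written_symbol_num[simp]:
  "written_symbol c 11 = 11" "written_symbol c 27 = 27" "written_symbol c 5 = 5" "written_symbol c 6 = 6"
   "written_symbol c (Suc (Suc (Suc (Suc (Suc (Suc (Suc (Suc (enc_letter a))))))))) = enc_letter a + 8"
   "written_symbol c (enc_letter a + 8) = enc_letter a + 8"
  by (cases a; simp add: written_symbol_def)+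

lemma sweep_single:
  "sweep verifier_step st [c] = (fst (verifier_step st c), [written_symbol c (snd (verifier_step st c))])"
  by (simp add: Let_def)

lemma enc_letter_cases: "enc_letter a = 1 \<or> enc_letter a = 2"
  by (cases a) auto

lemma enc_letter_simps[simp]:
  "enc_letter a \<noteq> 0" "enc_letter a \<noteq> 3" "enc_letter a \<noteq> 4"
  "enc_letter a \<noteq> 5" "enc_letter a \<noteq> 6" "enc_letter a \<noteq> 7" "enc_letter a < 32"
  "enc_letter a \<noteq> 11" "enc_letter a \<noteq> 27" "enc_letter a + 8 \<noteq> 1" "enc_letter a + 8 \<noteq> 2"
  "enc_letter a + 8 \<noteq> 4" "enc_letter a + 8 \<noteq> 11" "enc_letter a + 8 \<noteq> 27" "enc_letter a + 8 \<noteq> 0"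
  "enc_letter a + 8 < 32" "letter_of_code (enc_letter a) = a" "instr_of_code (enc_letter a) = (if a = La then Adv else Tst)"
  by (cases a; simp add: letter_of_code_def instr_of_code_def)+

lemma instr_of_code_simps[simp]:
  "instr_of_code 1 = Adv" "instr_of_code (Suc 0) = Adv" "instr_of_code 2 = Tst" by (auto simp: instr_of_code_def)

lemma instr_of_code_of_instr: "map instr_of_code (map code_of_instr ops) = ops"
proof -
  have "instr_of_code (code_of_instr a) = a" for a
    by (cases a) (simp_all add: instr_of_code_def)
  then show ?thesis by (induction ops) auto
qed

lemma code_of_instr_range: "set (map code_of_instr ops) \<subseteq> {1, 2}"
proof -
  have "code_of_instr a \<in> {1, 2}" for a
    by (cases a) simp_all
  then show ?thesis by auto
qed

subsection \<open>The syntax check\<close>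

lemma sweep_Syntax: "sweep verifier_step (Syntax q) zs = (Syntax (foldl syntax_dfa q zs), zs)"
  by (induction zs arbitrary: q) (auto simp: Let_def)

lemma foldl_syntax_dfa_Err: "foldl syntax_dfa Err y = Err"
  by (induction y) auto

lemma syntax_dfa_certificate:
  "set y \<subseteq> {1, 2} \<Longrightarrow> (foldl syntax_dfa Cb y = Cb \<longleftrightarrow> well_formed (map instr_of_code y)) \<and>
  (foldl syntax_dfa Ca y = Cb \<longleftrightarrow> well_formed (map instr_of_code y) \<and> 2 \<in> set y) \<and>
  (foldl syntax_dfa Ch y = Cb \<longleftrightarrow> (\<exists>r. y = 2 # r \<and> well_formed (map instr_of_code r)))"
proof (induction y)
  case Nil then show ?case by simp
next
  case (Cons c r)
  then have c: "c = 1 \<or> c = 2" and IH: "(foldl syntax_dfa Cb r = Cb \<longleftrightarrow> well_formed (map instr_of_code r)) \<and>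
  (foldl syntax_dfa Ca r = Cb \<longleftrightarrow> well_formed (map instr_of_code r) \<and> 2 \<in> set r) \<and>
  (foldl syntax_dfa Ch r = Cb \<longleftrightarrow> (\<exists>r'. r = 2 # r' \<and> well_formed (map instr_of_code r')))" by auto
  from c show ?case
  proof
    assume c1: "c = 1"
    show ?thesis using IH unfolding c1 by (simp add: foldl_syntax_dfa_Err)
  next
    assume c2: "c = 2"
    have "well_formed (map instr_of_code (2 # r)) \<longleftrightarrow> (\<exists>r'. r = 2 # r' \<and> well_formed (map instr_of_code r'))"
    proof
      assume "well_formed (map instr_of_code (2 # r))"
      then obtain x' where x: "map instr_of_code r = Tst # x'" "well_formed x'" using well_formed_Tst_Cons by auto
      then obtain c' r' where r: "r = c' # r'" "instr_of_code c' = Tst" "map instr_of_code r' = x'" by (cases r) auto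
      have "c' = 2" using r Cons.prems by (auto simp: instr_of_code_def)
      then show "\<exists>r'. r = 2 # r' \<and> well_formed (map instr_of_code r')" using r x by auto
    next
      assume "\<exists>r'. r = 2 # r' \<and> well_formed (map instr_of_code r')"
      then show "well_formed (map instr_of_code (2 # r))" by auto
    qed
    then show ?thesis using IH unfolding c2 by (simp add: foldl_syntax_dfa_Err)
  qed
qed

definition enc_words :: "letter list list \<Rightarrow> nat list" where "enc_words ws = concat (map enc_word ws)"

lemma enc_words_simps[simp]:
  "enc_words [] = []" "enc_words (ws @ [w]) = enc_words ws @ map enc_letter w @ [3]"
  by (auto simp: enc_words_def enc_word_def)

lemma enc_words_length:
  "length us \<le> length (enc_words us)" "u \<in> set us \<Longrightarrow> length u < length (enc_words us)"
  by (induction us) (auto simp: enc_words_def enc_word_def)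

fun syntax_inv :: "syntax_state \<Rightarrow> nat list \<Rightarrow> bool" where
  "syntax_inv U0 x = (\<exists>us. (\<forall>w\<in>set us. w \<noteq> []) \<and> x = enc_words us)"
| "syntax_inv U1 x = (\<exists>us w. (\<forall>w\<in>set us. w \<noteq> []) \<and> w \<noteq> [] \<and> x = enc_words us @ map enc_letter w)"
| "syntax_inv V0 x = (\<exists>us vs. (\<forall>w\<in>set (us @ vs). w \<noteq> []) \<and> x = enc_words us @ [4] @ enc_words vs)"
| "syntax_inv V1 x = (\<exists>us vs w. (\<forall>w\<in>set (us @ vs). w \<noteq> []) \<and> w \<noteq> [] \<and> x = enc_words us @ [4] @ enc_words vs @ map enc_letter w)"
| "syntax_inv Kz x = (\<exists>us vs bits. (\<forall>w\<in>set (us @ vs). w \<noteq> []) \<and> set bits \<subseteq> {5, 6} \<and> (bits = [] \<or> last bits = 6) \<and>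
      x = enc_words us @ [4] @ enc_words vs @ [4] @ bits)"
| "syntax_inv Kn x = (\<exists>us vs bits. (\<forall>w\<in>set (us @ vs). w \<noteq> []) \<and> set bits \<subseteq> {5, 6} \<and> bits \<noteq> [] \<and> last bits = 5 \<and>
      x = enc_words us @ [4] @ enc_words vs @ [4] @ bits)"
| "syntax_inv _ x = True"

lemma singleton_letter_code:
  "c = 1 \<or> c = 2 \<Longrightarrow> [c] = map enc_letter [letter_of_code c]"
  by (auto simp: letter_of_code_def)

lemma syntax_inv_step_positive:
  assumes I: "syntax_inv q x" and q: "q \<in> {U0, U1}"
  shows "syntax_inv (syntax_dfa q c) (x @ [c])"
  using q
proof (elim insertE emptyE)
  assume "q = U0"
  then obtain us where us: "\<forall>w\<in>set us. w \<noteq> []" "x = enc_words us" using I \<open>q = U0\<close> by auto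
  show ?thesis
  proof (cases "c = 1 \<or> c = 2")
    case True
    have "syntax_inv U1 (x @ [c])" unfolding syntax_inv.simps
      by (intro exI[of _ us] exI[of _ "[letter_of_code c]"]) (use us singleton_letter_code[OF True] in auto)
    then show ?thesis using \<open>q = U0\<close> True by auto
  next
    case False
    show ?thesis
    proof (cases "c = 4")
      case True
      have "syntax_inv V0 (x @ [4])" using us by (simp, intro exI[of _ us] exI[of _ "[]"], simp)
      then show ?thesis using \<open>q = U0\<close> True by simp
    qed (use \<open>q = U0\<close> False in simp)
  qed
next
  assume "q = U1"
  then obtain us w where us: "\<forall>w\<in>set us. w \<noteq> []" "w \<noteq> []" "x = enc_words us @ map enc_letter w" using I \<open>q = U1\<close> by auto
  show ?thesis
  proof (cases "c = 1 \<or> c = 2")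
    case True
    have "syntax_inv U1 (x @ [c])" unfolding syntax_inv.simps
      by (intro exI[of _ us] exI[of _ "w @ [letter_of_code c]"]) (use us singleton_letter_code[OF True] in auto)
    then show ?thesis using \<open>q = U1\<close> True by auto
  next
    case False
    show ?thesis
    proof (cases "c = 3")
      case True
      have "syntax_inv U0 (x @ [3])" unfolding syntax_inv.simps
        by (intro exI[of _ "us @ [w]"]) (use us in auto)
      then show ?thesis using \<open>q = U1\<close> True by simp
    qed (use \<open>q = U1\<close> False in simp)
  qed
qed

lemma syntax_inv_step_negative:
  assumes I: "syntax_inv q x" and q: "q \<in> {V0, V1}"
  shows "syntax_inv (syntax_dfa q c) (x @ [c])"
  using q
proof (elim insertE emptyE)
  assume "q = V0"
  then obtain us vs where us: "\<forall>w\<in>set (us @ vs). w \<noteq> []" "x = enc_words us @ [4] @ enc_words vs" using I \<open>q = V0\<close> by auto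
  show ?thesis
  proof (cases "c = 1 \<or> c = 2")
    case True
    have "syntax_inv V1 (x @ [c])" unfolding syntax_inv.simps
      by (intro exI[of _ us] exI[of _ vs] exI[of _ "[letter_of_code c]"]) (use us singleton_letter_code[OF True] in auto)
    then show ?thesis using \<open>q = V0\<close> True by auto
  next
    case False
    show ?thesis
    proof (cases "c = 4")
      case True
      have "syntax_inv Kz (x @ [4])" using us by (simp, intro exI[of _ us] exI[of _ vs] exI[of _ "[]"], simp)
      then show ?thesis using \<open>q = V0\<close> True by simp
    qed (use \<open>q = V0\<close> False in simp)
  qed
next
  assume "q = V1"
  then obtain us vs w where us: "\<forall>w\<in>set (us @ vs). w \<noteq> []" "w \<noteq> []" "x = enc_words us @ [4] @ enc_words vs @ map enc_letter w" using I \<open>q = V1\<close> by auto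
  show ?thesis
  proof (cases "c = 1 \<or> c = 2")
    case True
    have "syntax_inv V1 (x @ [c])" unfolding syntax_inv.simps
      by (intro exI[of _ us] exI[of _ vs] exI[of _ "w @ [letter_of_code c]"]) (use us singleton_letter_code[OF True] in auto)
    then show ?thesis using \<open>q = V1\<close> True by auto
  next
    case False
    show ?thesis
    proof (cases "c = 3")
      case True
      have "syntax_inv V0 (x @ [3])" unfolding syntax_inv.simps
        by (intro exI[of _ us] exI[of _ "vs @ [w]"]) (use us in auto)
      then show ?thesis using \<open>q = V1\<close> True by simp
    qed (use \<open>q = V1\<close> False in simp)
  qed
qed

lemma syntax_inv_step_counter:
  assumes I: "syntax_inv q x" and q: "q \<in> {Kz, Kn}"
  shows "syntax_inv (syntax_dfa q c) (x @ [c])"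
  using q
proof (elim insertE emptyE)
  assume "q = Kz"
  then obtain us vs bits where us: "\<forall>w\<in>set (us @ vs). w \<noteq> []" "set bits \<subseteq> {5, 6}" "bits = [] \<or> last bits = 6"
      "x = enc_words us @ [4] @ enc_words vs @ [4] @ bits" using I \<open>q = Kz\<close> by auto
  have i1: "syntax_inv Kz (x @ [6])" unfolding syntax_inv.simps
    by (intro exI[of _ us] exI[of _ vs] exI[of _ "bits @ [6]"]) (use us in auto)
  have i2: "syntax_inv Kn (x @ [5])" unfolding syntax_inv.simps
    by (intro exI[of _ us] exI[of _ vs] exI[of _ "bits @ [5]"]) (use us in auto)
  note i = i1 i2
  show ?thesis using \<open>q = Kz\<close> i by auto
next
  assume "q = Kn"
  then obtain us vs bits where us: "\<forall>w\<in>set (us @ vs). w \<noteq> []" "set bits \<subseteq> {5, 6}" "bits \<noteq> []" "last bits = 5"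
      "x = enc_words us @ [4] @ enc_words vs @ [4] @ bits" using I \<open>q = Kn\<close> by auto
  have i1: "syntax_inv Kz (x @ [6])" unfolding syntax_inv.simps
    by (intro exI[of _ us] exI[of _ vs] exI[of _ "bits @ [6]"]) (use us in auto)
  have i2: "syntax_inv Kn (x @ [5])" unfolding syntax_inv.simps
    by (intro exI[of _ us] exI[of _ vs] exI[of _ "bits @ [5]"]) (use us in auto)
  note i = i1 i2
  show ?thesis using \<open>q = Kn\<close> i by auto

qed

lemma syntax_inv_step:
  assumes "syntax_inv q x"
  shows "syntax_inv (syntax_dfa q c) (x @ [c])"
  using syntax_inv_step_positive[OF assms] syntax_inv_step_negative[OF assms] syntax_inv_step_counter[OF assms]
  by (cases q) auto

lemma syntax_inv_run: "syntax_inv (foldl syntax_dfa U0 x) x"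
proof (induction x rule: rev_induct)
  case Nil
  then show ?case by (auto intro: exI[of _ "[]"])
next
  case (snoc c x)
  then show ?case using syntax_inv_step[of "foldl syntax_dfa U0 x" x c] by simp
qed

lemma enc_bin_0: "enc_bin 0 = []" by simp

lemma enc_bin_pos:
  "0 < k \<Longrightarrow> enc_bin k = (if k mod 2 = 0 then 5 else 6) # enc_bin (k div 2)" by simp

declare enc_bin.simps[simp del]

lemma enc_bin_set: "set (enc_bin k) \<subseteq> {5, 6}"
proof (induction k rule: less_induct)
  case (less k)
  show ?case
  proof (cases "k = 0")
    case True then show ?thesis by (simp add: enc_bin_0)
  next
    case False then show ?thesis using less[of "k div 2"] by (simp add: enc_bin_pos)
  qed
qed

fun bits_value :: "nat list \<Rightarrow> nat" where
  "bits_value [] = 0"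
| "bits_value (d # ds) = (if d = 6 then 1 else 0) + 2 * bits_value ds"

lemma bits_value_enc_bin: "bits_value (enc_bin k) = k"
proof (induction k rule: less_induct)
  case (less k)
  show ?case
  proof (cases "k = 0")
    case True then show ?thesis by (simp add: enc_bin_0)
  next
    case False then show ?thesis using less[of "k div 2"] by (simp add: enc_bin_pos) presburger
  qed
qed

lemma bits_value_pos:
  "r \<noteq> [] \<Longrightarrow> last r = 6 \<Longrightarrow> 0 < bits_value r"
  by (induction r) (auto split: if_splits)

lemma enc_bin_bits_value:
  "set bits \<subseteq> {5, 6} \<Longrightarrow> bits = [] \<or> last bits = 6 \<Longrightarrow> enc_bin (bits_value bits) = bits"
proof (induction bits)
  case Nil then show ?case by (simp add: enc_bin_0)
next
  case (Cons d r)
  show ?case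
  proof (cases "r = []")
    case True
    then have "d = 6" using Cons.prems by simp
    then show ?thesis using True by (simp add: enc_bin_pos enc_bin_0)
  next
    case False
    then have l: "last r = 6" using Cons.prems by simp
    have IH: "enc_bin (bits_value r) = r" using Cons.IH Cons.prems l by simp
    have p: "0 < bits_value r" using bits_value_pos[OF False l] .
    have d: "d = 5 \<or> d = 6" using Cons.prems by simp
    show ?thesis using d p IH by (auto simp: enc_bin_pos)
  qed
qed

lemma syntax_dfa_letter: "syntax_dfa U0 (enc_letter a) = U1" "syntax_dfa V0 (enc_letter a) = V1"
  "syntax_dfa U1 (enc_letter a) = U1" "syntax_dfa V1 (enc_letter a) = V1"
  by (cases a; simp)+

lemma syntax_dfa_3: "syntax_dfa U1 3 = U0" "syntax_dfa V1 3 = V0" by simp_all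

lemma syntax_dfa_U1_word: "foldl syntax_dfa U1 (map enc_letter w) = U1"
  by (induction w) (auto simp: syntax_dfa_letter simp del: syntax_dfa.simps)

lemma syntax_dfa_V1_word: "foldl syntax_dfa V1 (map enc_letter w) = V1"
  by (induction w) (auto simp: syntax_dfa_letter simp del: syntax_dfa.simps)

lemma syntax_dfa_enc_words_U:
  "\<forall>w\<in>set us. w \<noteq> [] \<Longrightarrow> foldl syntax_dfa U0 (enc_words us) = U0"
proof (induction us)
  case (Cons w us)
  then obtain a w' where w: "w = a # w'" by (cases w) auto
  then show ?case using Cons by (simp add: enc_words_def enc_word_def syntax_dfa_letter syntax_dfa_U1_word syntax_dfa_3 del: syntax_dfa.simps)
qed (simp)

lemma syntax_dfa_enc_words_V:
  "\<forall>w\<in>set us. w \<noteq> [] \<Longrightarrow> foldl syntax_dfa V0 (enc_words us) = V0"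
proof (induction us)
  case (Cons w us)
  then obtain a w' where w: "w = a # w'" by (cases w) auto
  then show ?case using Cons by (simp add: enc_words_def enc_word_def syntax_dfa_letter syntax_dfa_V1_word syntax_dfa_3 del: syntax_dfa.simps)
qed (simp)

lemma syntax_dfa_enc_bin_pos:
  "0 < k \<Longrightarrow> foldl syntax_dfa Kz (enc_bin k) = Kz \<and> foldl syntax_dfa Kn (enc_bin k) = Kz"
proof (induction k rule: less_induct)
  case (less k)
  show ?case
  proof (cases "k div 2 = 0")
    case True
    then have "k = 1" using less.prems by auto
    then show ?thesis by (simp add: enc_bin_pos enc_bin_0)
  next
    case False
    have e: "enc_bin k = (if k mod 2 = 0 then 5 else 6) # enc_bin (k div 2)" using less.prems by (rule enc_bin_pos)
    have IH: "foldl syntax_dfa Kz (enc_bin (k div 2)) = Kz" "foldl syntax_dfa Kn (enc_bin (k div 2)) = Kz"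
      using less.IH[of "k div 2"] less.prems False by auto
    show ?thesis unfolding e using IH by (cases "k mod 2 = 0") auto
  qed
qed

lemma syntax_dfa_enc_bin: "foldl syntax_dfa Kz (enc_bin k) = Kz"
  using syntax_dfa_enc_bin_pos[of k] by (cases "k = 0") (auto simp: enc_bin_0)

lemma enc_inst_enc_words: "enc_inst us vs k = enc_words us @ [4] @ enc_words vs @ [4] @ enc_bin k"
  by (simp add: enc_inst_def enc_words_def)

lemma syntax_dfa_accepts_instance:
  assumes "\<forall>w\<in>set (us @ vs). w \<noteq> []" "set y \<subseteq> {1, 2}" "well_formed (map instr_of_code y)" "2 \<in> set y"
  shows "foldl syntax_dfa U0 (enc_inst us vs k @ [7] @ y) = Cb"
proof -
  have "foldl syntax_dfa U0 (enc_inst us vs k @ [7]) = Ca"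
    unfolding enc_inst_enc_words using assms(1) by (simp add: syntax_dfa_enc_words_U syntax_dfa_enc_words_V syntax_dfa_enc_bin)
  then show ?thesis using syntax_dfa_certificate[OF assms(2)] assms(3,4) by simp
qed

lemma syntax_dfa_7: "q \<noteq> Kz \<Longrightarrow> syntax_dfa q 7 = Err"
  by (cases q) auto

lemma instance_if_syntax_dfa_accepts:
  assumes y: "set y \<subseteq> {1, 2}" and acc: "foldl syntax_dfa U0 (x @ [7] @ y) = Cb"
  shows "\<exists>us vs k. (\<forall>w\<in>set (us @ vs). w \<noteq> []) \<and> x = enc_inst us vs k \<and> well_formed (map instr_of_code y) \<and> 2 \<in> set y"
proof -
  let ?q = "foldl syntax_dfa U0 x"
  have e: "foldl syntax_dfa U0 (x @ [7] @ y) = foldl syntax_dfa (syntax_dfa ?q 7) y" by simp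
  have qk: "?q = Kz"
  proof (rule ccontr)
    assume "?q \<noteq> Kz"
    then have "foldl syntax_dfa U0 (x @ [7] @ y) = Err" using e syntax_dfa_7[OF \<open>?q \<noteq> Kz\<close>] foldl_syntax_dfa_Err by simp
    then show False using acc by simp
  qed
  have c: "foldl syntax_dfa Ca y = Cb" using acc e qk by simp
  have "syntax_inv Kz x" using syntax_inv_run[of x] qk by simp
  then obtain us vs bits where I: "\<forall>w\<in>set (us @ vs). w \<noteq> []" "set bits \<subseteq> {5, 6}" "bits = [] \<or> last bits = 6"
      "x = enc_words us @ [4] @ enc_words vs @ [4] @ bits" by auto
  have "x = enc_inst us vs (bits_value bits)" unfolding enc_inst_enc_words enc_bin_bits_value[OF I(2,3)] using I(4) .
  then show ?thesis using I(1) syntax_dfa_certificate[OF y] c by blast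
qed

lemma sweeps_accept_syntax:
  "sweeps_accept verifier_step verifier_verdict (Suc N) (Syntax U0) z \<longleftrightarrow> foldl syntax_dfa U0 z = Cb \<and> sweeps_accept verifier_step verifier_verdict N (Match SU False False) z"
  by (simp add: sweep_Syntax)

subsection \<open>Checking that there are as many positive as negative words\<close>

definition count_word :: "bool \<Rightarrow> letter list \<Rightarrow> nat list" where
  "count_word b w = map enc_letter w @ [if b then 11 else 3]"

fun count_words :: "nat \<Rightarrow> letter list list \<Rightarrow> nat list" where
  "count_words i [] = []"
| "count_words i (w # ws) = count_word (0 < i) w @ count_words (i - 1) ws"

lemma sweep_Match_other:
  "\<forall>c\<in>set cs. c \<noteq> 3 \<and> c \<noteq> 4 \<Longrightarrow> sweep verifier_step (Match sec fu fv) cs = (Match sec fu fv, cs)"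
  by (induction cs) (auto simp: Let_def)

lemma enc_letters_not_separator:
  "\<forall>c\<in>set (map enc_letter w). c \<noteq> 3 \<and> c \<noteq> 4"
  by simp

lemma sweep_count_word_U: "sweep verifier_step (Match SU fu fv) (count_word b w) =
   (if \<not> b \<and> \<not> fu then (Match SU True fv, count_word True w) else (Match SU fu fv, count_word b w))"
  unfolding count_word_def sweep_append sweep_Match_other[OF enc_letters_not_separator] Let_def fst_conv snd_conv
  by simp

lemma sweep_count_word_V: "sweep verifier_step (Match SV fu fv) (count_word b w) =
   (if \<not> b \<and> \<not> fv then (Match SV fu True, count_word True w) else (Match SV fu fv, count_word b w))"
  unfolding count_word_def sweep_append sweep_Match_other[OF enc_letters_not_separator] Let_def fst_conv snd_conv
  by simp

lemma sweep_count_words_U_found: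
  "sweep verifier_step (Match SU True fv) (count_words i us) = (Match SU True fv, count_words i us)"
  by (induction us arbitrary: i) (simp_all add: sweep_append Let_def sweep_count_word_U del: sweep.simps(2))

lemma sweep_count_words_V_found:
  "sweep verifier_step (Match SV fu True) (count_words i vs) = (Match SV fu True, count_words i vs)"
  by (induction vs arbitrary: i) (simp_all add: sweep_append Let_def sweep_count_word_V del: sweep.simps(2))

lemma sweep_count_words_U:
  "sweep verifier_step (Match SU False fv) (count_words i us) = (Match SU (i < length us) fv, count_words (Suc i) us)"
  by (induction us arbitrary: i)
    (auto simp: sweep_append Let_def sweep_count_word_U sweep_count_words_U_found split: nat.split simp del: sweep.simps(2))

lemma sweep_count_words_V:
  "sweep verifier_step (Match SV fu False) (count_words i vs) = (Match SV fu (i < length vs), count_words (Suc i) vs)"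
  by (induction vs arbitrary: i)
    (auto simp: sweep_append Let_def sweep_count_word_V sweep_count_words_V_found split: nat.split simp del: sweep.simps(2))

lemma count_words_ge:
  "length us \<le> i \<Longrightarrow> count_words i us = count_words (Suc i) us"
proof (induction us arbitrary: i)
  case (Cons w us)
  then obtain j where "i = Suc j" "length us \<le> j" by (cases i) auto
  then show ?case using Cons.IH[of j] by simp
qed simp

definition count_tape :: "letter list list \<Rightarrow> letter list list \<Rightarrow> nat list \<Rightarrow> nat list \<Rightarrow> nat \<Rightarrow> nat list" where
  "count_tape us vs bits y i = count_words i us @ [4] @ count_words i vs @ [4] @ bits @ [7] @ y"

lemma sweep_count_tape:
  assumes "set bits \<subseteq> {5, 6}" "set y \<subseteq> {1, 2}"
  shows "sweep verifier_step (Match SU False False) (count_tape us vs bits y i) = (Match SK (i < length us) (i < length vs), count_tape us vs bits y (Suc i))"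
proof -
  have cp1: "\<forall>c\<in>set bits. c \<noteq> 3 \<and> c \<noteq> 4" using assms by auto
  have cp2: "\<forall>c\<in>set y. c \<noteq> 3 \<and> c \<noteq> 4" using assms by auto
  show ?thesis
    unfolding count_tape_def sweep_append Let_def sweep_count_words_U fst_conv snd_conv
    by (simp add: sweep_count_words_V sweep_Match_other[OF cp1] sweep_Match_other[OF cp2] sweep_single del: sweep.simps)
qed

lemma sweeps_accept_count_tape:
  assumes bits: "set bits \<subseteq> {5, 6}" and y: "set y \<subseteq> {1, 2}"
  shows "i \<le> length us \<Longrightarrow> i \<le> length vs \<Longrightarrow> length us - i < N \<Longrightarrow>
    sweeps_accept verifier_step verifier_verdict N (Match SU False False) (count_tape us vs bits y i) \<longleftrightarrow>
    length us = length vs \<and> sweeps_accept verifier_step verifier_verdict (N - (length us - i) - 1) (eval_start None False) (count_tape us vs bits y (length us))"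
proof (induction "length us - i" arbitrary: i N)
  case 0
  then have e: "i = length us" by simp
  obtain N' where N': "N = Suc N'" using 0 by (cases N) auto
  show ?case
  proof (cases "i < length vs")
    case True
    then show ?thesis unfolding N' sweeps_accept.simps(2) sweep_count_tape[OF bits y] using e by simp
  next
    case False
    then have "i = length vs" using 0 by simp
    moreover have "count_tape us vs bits y (Suc i) = count_tape us vs bits y i"
      unfolding count_tape_def using e \<open>i = length vs\<close> count_words_ge[of us i] count_words_ge[of vs i] by simp
    ultimately show ?thesis unfolding N' sweeps_accept.simps(2) sweep_count_tape[OF bits y] using e by (simp del: sweeps_accept.simps)
  qed
next
  case (Suc m)
  then have il: "i < length us" by simp
  obtain N' where N': "N = Suc N'" using Suc by (cases N) auto
  show ?case
  proof (cases "i < length vs")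
    case True
    have IH: "sweeps_accept verifier_step verifier_verdict N' (Match SU False False) (count_tape us vs bits y (Suc i)) \<longleftrightarrow>
      length us = length vs \<and> sweeps_accept verifier_step verifier_verdict (N' - (length us - Suc i) - 1) (eval_start None False) (count_tape us vs bits y (length us))"
      by (rule Suc.hyps(1)) (use Suc.hyps(2) Suc.prems il True N' in auto)
    have ar: "N' - (length us - Suc i) - 1 = N - (length us - i) - 1" using N' il by simp
    show ?thesis unfolding N' sweeps_accept.simps(2) sweep_count_tape[OF bits y] using il True IH ar by (simp del: sweeps_accept.simps)
  next
    case False
    then show ?thesis unfolding N' sweeps_accept.simps(2) sweep_count_tape[OF bits y] using il Suc.prems by simp
  qed
qed

lemma count_words_0: "count_words 0 ws = enc_words ws"
  by (induction ws) (auto simp: enc_words_def count_word_def enc_word_def)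

lemma enc_inst_count_tape: "enc_inst us vs k @ [7] @ y = count_tape us vs (enc_bin k) y 0"
  by (simp add: count_tape_def enc_inst_enc_words count_words_0)

subsection \<open>Evaluating the certificate\<close>

definition eval_word :: "nat \<Rightarrow> bool \<Rightarrow> letter list \<Rightarrow> nat list" where
  "eval_word p r w = map (\<lambda>a. enc_letter a + 8) (take p w) @ map enc_letter (drop p w) @ [if r then 27 else 11]"

definition advance :: "instr option \<Rightarrow> nat \<Rightarrow> nat" where
  "advance op p = (if op = Some Adv then Suc p else p)"

fun test_u :: "instr option \<Rightarrow> nat \<Rightarrow> letter option \<times> bool \<Rightarrow> letter list \<Rightarrow> letter option \<times> bool" where
  "test_u (Some Tst) p (lt, fl) u = (if p < length u then (case lt of None \<Rightarrow> (Some (u ! p), fl)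
      | Some l \<Rightarrow> (lt, fl \<or> l \<noteq> u ! p)) else (lt, True))"
| "test_u _ p s u = s"

lemma eval_word_step_marked:
  "eval_word_step sec op dec w lt fl ar bor nb (enc_letter a + 8) = (Eval sec op dec w lt fl ar bor nb, enc_letter a + 8)"
  by simp

lemma eval_word_step_past_cursor:
  "w \<noteq> Seek \<Longrightarrow> eval_word_step sec op dec w lt fl ar bor nb (enc_letter a) = (Eval sec op dec w lt fl ar bor nb, enc_letter a)"
  using enc_letter_cases[of a] by auto

lemma sweep_marked_letters:
  assumes "sec = SU \<or> sec = SV"
  shows "sweep verifier_step (Eval sec op dec w lt fl ar bor nb) (map (\<lambda>a. enc_letter a + 8) xs) = (Eval sec op dec w lt fl ar bor nb, map (\<lambda>a. enc_letter a + 8) xs)"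
proof (induction xs)
  case Nil then show ?case by simp
next
  case (Cons a xs)
  have "verifier_step (Eval sec op dec w lt fl ar bor nb) (enc_letter a + 8) = (Eval sec op dec w lt fl ar bor nb, enc_letter a + 8)"
    using assms eval_word_step_marked by auto
  then show ?case using Cons.IH by (simp add: Let_def del: eval_word_step.simps)
qed

lemma sweep_letters_past_cursor:
  assumes "sec = SU \<or> sec = SV" "w \<noteq> Seek"
  shows "sweep verifier_step (Eval sec op dec w lt fl ar bor nb) (map enc_letter xs) = (Eval sec op dec w lt fl ar bor nb, map enc_letter xs)"
proof (induction xs)
  case Nil then show ?case by simp
next
  case (Cons a xs)
  have "verifier_step (Eval sec op dec w lt fl ar bor nb) (enc_letter a) = (Eval sec op dec w lt fl ar bor nb, enc_letter a)"
    using assms eval_word_step_past_cursor by auto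
  then show ?case using Cons.IH by (simp add: Let_def del: eval_word_step.simps)
qed

lemma eval_step_cursor_U: "verifier_step (Eval SU op dec Seek lt fl ar bor nb) (enc_letter a) =
  (Eval SU op dec Passed (fst (test_u op 0 (lt, fl) [a])) (snd (test_u op 0 (lt, fl) [a])) ar bor nb,
   if op = Some Adv then enc_letter a + 8 else enc_letter a)"
  by (cases a; cases op; cases "the op"; cases lt; cases "the lt") (auto simp: letter_of_code_def)

lemma test_u_pos: "p < length u \<Longrightarrow> test_u op p s u = test_u op 0 s [u ! p]"
  by (cases op; cases "the op"; cases s) (auto split: option.splits)

lemma test_u_neg:
  "\<not> p < length u \<Longrightarrow> test_u op p s u = (if op = Some Tst then (fst s, True) else s)"
  by (cases op; cases "the op"; cases s) auto

lemma advance_ge: "p \<le> advance op p" by (simp add: advance_def)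

lemma sweep_eval_word_U:
  "sweep verifier_step (Eval SU op dec Seek lt fl ar bor nb) (eval_word p False u) =
  (Eval SU op dec Seek (fst (test_u op p (lt, fl) u)) (snd (test_u op p (lt, fl) u)) ar bor nb, eval_word (advance op p) False u)"
proof (cases "p < length u")
  case False
  have w1: "eval_word p False u = map (\<lambda>a. enc_letter a + 8) u @ [11]" using False by (simp add: eval_word_def)
  have w2: "eval_word (advance op p) False u = map (\<lambda>a. enc_letter a + 8) u @ [11]" using False advance_ge[of p op]
    by (simp add: eval_word_def)
  show ?thesis unfolding w1 w2 sweep_append Let_def sweep_marked_letters[OF disjI1[OF refl]] fst_conv snd_conv sweep_single
    using False by (simp add: test_u_neg)
next
  case True
  let ?a = "u ! p"
  have dr: "drop p u = ?a # drop (Suc p) u" using True by (simp add: Cons_nth_drop_Suc)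
  have w1: "eval_word p False u = map (\<lambda>a. enc_letter a + 8) (take p u) @ [enc_letter ?a] @ map enc_letter (drop (Suc p) u) @ [11]"
    using dr by (simp add: eval_word_def)
  have w2: "eval_word (advance op p) False u = map (\<lambda>a. enc_letter a + 8) (take p u) @ [if op = Some Adv then enc_letter ?a + 8 else enc_letter ?a] @ map enc_letter (drop (Suc p) u) @ [11]"
    using True dr by (simp add: eval_word_def advance_def take_Suc_conv_app_nth)
  have cp: "sweep verifier_step (Eval SU op dec Passed l f ar bor nb) (map enc_letter xs) = (Eval SU op dec Passed l f ar bor nb, map enc_letter xs)" for l f xs
    by (rule sweep_letters_past_cursor) auto
  show ?thesis unfolding w1 w2 sweep_append Let_def sweep_marked_letters[OF disjI1[OF refl]] fst_conv snd_conv sweep_single eval_step_cursor_U cp test_u_pos[OF True]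
    by (simp del: test_u.simps)
qed

lemma eval_step_cursor_V: "verifier_step (Eval SV op dec Seek lt fl ar bor nb) (enc_letter a) =
  (Eval SV op dec (if op = Some Tst \<and> a \<noteq> chosen_letter lt then Failed else Passed) lt fl ar bor nb,
   if op = Some Adv then enc_letter a + 8 else enc_letter a)"
  by (cases a; cases op; cases "the op"; cases "chosen_letter lt") auto

lemma eval_step_terminator_V:
  "verifier_step (Eval SV op dec w lt fl ar bor nb) (if r then 27 else 11) =
  (let rj = r \<or> w = Failed \<or> (op = Some Tst \<and> w = Seek) in (Eval SV op dec Seek lt fl (ar \<and> rj) bor nb, if rj then 27 else 11))"
  by (cases r) (auto simp: Let_def)

lemma sweep_eval_word_V:
  "sweep verifier_step (Eval SV op dec Seek lt fl ar bor nb) (eval_word p r v) =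
  (let r' = r \<or> (op = Some Tst \<and> mismatch (chosen_letter lt) p v) in
   (Eval SV op dec Seek lt fl (ar \<and> r') bor nb, eval_word (advance op p) r' v))"
proof (cases "p < length v")
  case False
  have w1: "eval_word p r v = map (\<lambda>a. enc_letter a + 8) v @ [if r then 27 else 11]" using False by (simp add: eval_word_def)
  have w2: "eval_word (advance op p) r' v = map (\<lambda>a. enc_letter a + 8) v @ [if r' then 27 else 11]" for r' using False advance_ge[of p op]
    by (simp add: eval_word_def)
  show ?thesis unfolding w1 w2 sweep_append sweep_marked_letters[OF disjI2[OF refl]] fst_conv snd_conv sweep_single eval_step_terminator_V
    using False by (simp add: Let_def mismatch_def)
next
  case True
  let ?a = "v ! p"
  have dr: "drop p v = ?a # drop (Suc p) v" using True by (simp add: Cons_nth_drop_Suc)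
  have w1: "eval_word p r v = map (\<lambda>a. enc_letter a + 8) (take p v) @ [enc_letter ?a] @ map enc_letter (drop (Suc p) v) @ [if r then 27 else 11]"
    using dr by (simp add: eval_word_def)
  have w2: "eval_word (advance op p) r' v = map (\<lambda>a. enc_letter a + 8) (take p v) @ [if op = Some Adv then enc_letter ?a + 8 else enc_letter ?a] @ map enc_letter (drop (Suc p) v) @ [if r' then 27 else 11]" for r'
    using True dr by (simp add: eval_word_def advance_def take_Suc_conv_app_nth)
  have cp: "w \<noteq> Seek \<Longrightarrow> sweep verifier_step (Eval SV op dec w lt fl ar bor nb) (map enc_letter xs) = (Eval SV op dec w lt fl ar bor nb, map enc_letter xs)" for w xs
    by (rule sweep_letters_past_cursor) auto
  define W where "W = (if op = Some Tst \<and> ?a \<noteq> chosen_letter lt then Failed else Passed)"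
  have ne: "W \<noteq> Seek" by (simp add: W_def)
  define c1 where "c1 = (if op = Some Adv then enc_letter ?a + 8 else enc_letter ?a)"
  have s1: "sweep verifier_step (Eval SV op dec Seek lt fl ar bor nb) (map (\<lambda>a. enc_letter a + 8) (take p v) @ [enc_letter ?a]) =
     (Eval SV op dec W lt fl ar bor nb, map (\<lambda>a. enc_letter a + 8) (take p v) @ [c1])"
    unfolding sweep_append sweep_marked_letters[OF disjI2[OF refl]] Let_def fst_conv snd_conv sweep_single eval_step_cursor_V W_def c1_def
    by simp
  have s2: "sweep verifier_step (Eval SV op dec W lt fl ar bor nb) (map enc_letter (drop (Suc p) v) @ [if r then 27 else 11]) =
     (let rj = r \<or> W = Failed in (Eval SV op dec Seek lt fl (ar \<and> rj) bor nb, map enc_letter (drop (Suc p) v) @ [if rj then 27 else 11]))"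
    unfolding sweep_append cp[OF ne] Let_def fst_conv snd_conv sweep_single eval_step_terminator_V using ne by simp
  have rr: "(r \<or> W = Failed) = (r \<or> (op = Some Tst \<and> mismatch (chosen_letter lt) p v))"
    using True by (auto simp: W_def mismatch_def)
  have "sweep verifier_step (Eval SV op dec Seek lt fl ar bor nb) (eval_word p r v) = sweep verifier_step (Eval SV op dec Seek lt fl ar bor nb)
     ((map (\<lambda>a. enc_letter a + 8) (take p v) @ [enc_letter ?a]) @ (map enc_letter (drop (Suc p) v) @ [if r then 27 else 11]))"
    unfolding w1 by simp
  also have "\<dots> = (let rj = r \<or> W = Failed in (Eval SV op dec Seek lt fl (ar \<and> rj) bor nb,
      (map (\<lambda>a. enc_letter a + 8) (take p v) @ [c1]) @ map enc_letter (drop (Suc p) v) @ [if rj then 27 else 11]))"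
    unfolding sweep_append[of _ _ "_ @ [enc_letter ?a]"] s1 Let_def fst_conv snd_conv s2 by simp
  finally show ?thesis unfolding rr Let_def w2 c1_def by simp
qed

lemma sweep_eval_u_words:
  "sweep verifier_step (Eval SU op dec Seek lt fl ar bor nb) (concat (map (eval_word p False) us)) =
  (Eval SU op dec Seek (fst (foldl (test_u op p) (lt, fl) us)) (snd (foldl (test_u op p) (lt, fl) us)) ar bor nb,
   concat (map (eval_word (advance op p) False) us))"
proof (induction us arbitrary: lt fl)
  case Nil then show ?case by simp
next
  case (Cons u us)
  obtain lt1 fl1 where u1: "test_u op p (lt, fl) u = (lt1, fl1)" by force
  have "sweep verifier_step (Eval SU op dec Seek lt fl ar bor nb) (concat (map (eval_word p False) (u # us))) =
    sweep verifier_step (Eval SU op dec Seek lt fl ar bor nb) (eval_word p False u @ concat (map (eval_word p False) us))" by simp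
  also have "\<dots> = (Eval SU op dec Seek (fst (foldl (test_u op p) (lt1, fl1) us)) (snd (foldl (test_u op p) (lt1, fl1) us)) ar bor nb,
     eval_word (advance op p) False u @ concat (map (eval_word (advance op p) False) us))"
    unfolding sweep_append Let_def sweep_eval_word_U u1 fst_conv snd_conv Cons.IH by simp
  finally show ?case using u1 by simp
qed

definition eval_v_words :: "nat \<Rightarrow> letter list list \<Rightarrow> bool list \<Rightarrow> nat list" where
  "eval_v_words p vs rs = concat (map (\<lambda>(v, r). eval_word p r v) (zip vs rs))"

definition update_rejected :: "instr option \<Rightarrow> letter \<Rightarrow> nat \<Rightarrow> letter list list \<Rightarrow> bool list \<Rightarrow> bool list" where
  "update_rejected op l p vs rs = map (\<lambda>(v, r). r \<or> (op = Some Tst \<and> mismatch l p v)) (zip vs rs)"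

lemma update_rejected_length:
  "length rs = length vs \<Longrightarrow> length (update_rejected op l p vs rs) = length vs"
  by (simp add: update_rejected_def)

lemma sweep_eval_v_words:
  "length rs = length vs \<Longrightarrow> sweep verifier_step (Eval SV op dec Seek lt fl ar bor nb) (eval_v_words p vs rs) =
  (Eval SV op dec Seek lt fl (ar \<and> (\<forall>r\<in>set (update_rejected op (chosen_letter lt) p vs rs). r)) bor nb,
   eval_v_words (advance op p) vs (update_rejected op (chosen_letter lt) p vs rs))"
proof (induction vs arbitrary: rs ar)
  case Nil then show ?case by (simp add: eval_v_words_def update_rejected_def)
next
  case (Cons v vs)
  then obtain r rs' where rs: "rs = r # rs'" "length rs' = length vs" by (cases rs) auto
  define r1 where "r1 = (r \<or> (op = Some Tst \<and> mismatch (chosen_letter lt) p v))"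
  have "sweep verifier_step (Eval SV op dec Seek lt fl ar bor nb) (eval_v_words p (v # vs) rs) =
    sweep verifier_step (Eval SV op dec Seek lt fl ar bor nb) (eval_word p r v @ eval_v_words p vs rs')" by (simp add: eval_v_words_def rs)
  also have "\<dots> = (Eval SV op dec Seek lt fl ((ar \<and> r1) \<and> (\<forall>r\<in>set (update_rejected op (chosen_letter lt) p vs rs'). r)) bor nb,
     eval_word (advance op p) r1 v @ eval_v_words (advance op p) vs (update_rejected op (chosen_letter lt) p vs rs'))"
    unfolding sweep_append Let_def sweep_eval_word_V fst_conv snd_conv Cons.IH[OF rs(2)] r1_def by simp
  finally show ?case by (simp add: rs eval_v_words_def update_rejected_def r1_def)
qed

fun decrement_bits :: "bool \<Rightarrow> nat list \<Rightarrow> bool \<times> nat list" where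
  "decrement_bits b [] = (b, [])"
| "decrement_bits b (d # ds) = (if b then (if d = 5 then (fst (decrement_bits True ds), 6 # snd (decrement_bits True ds)) else (False, 5 # ds))
     else (False, d # ds))"

lemma decrement_bits_False[simp]: "decrement_bits False ds = (False, ds)"
  by (cases ds) auto

lemma sweep_counter:
  "set ds \<subseteq> {5, 6} \<Longrightarrow> sweep verifier_step (Eval SK op dec w lt fl ar bor nb) ds =
   (Eval SK op dec w lt fl ar (fst (decrement_bits bor ds)) nb, snd (decrement_bits bor ds))"
proof (induction ds arbitrary: bor)
  case Nil then show ?case by simp
next
  case (Cons d ds)
  then have d: "d = 5 \<or> d = 6" and ds: "set ds \<subseteq> {5, 6}" by auto
  have IH: "sweep verifier_step (Eval SK op dec w lt fl ar b nb) ds = (Eval SK op dec w lt fl ar (fst (decrement_bits b ds)) nb, snd (decrement_bits b ds))" for b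
    by (rule Cons.IH[OF ds])
  from d show ?case
  proof
    assume d5: "d = 5"
    show ?thesis unfolding d5 using IH[of bor] IH[of False] by (cases bor) (simp_all add: Let_def)
  next
    assume d6: "d = 6"
    show ?thesis unfolding d6 using IH[of bor] IH[of False] by (cases bor) (simp_all add: Let_def)
  qed
qed

definition mark_cert :: "nat \<Rightarrow> nat list \<Rightarrow> nat list" where
  "mark_cert j y = map (\<lambda>c. c + 8) (take j y) @ drop j y"

lemma sweep_cert_marked:
  "set xs \<subseteq> {1, 2} \<Longrightarrow> sweep verifier_step (Eval SC op dec w lt fl ar bor nb) (map (\<lambda>c. c + 8) xs) =
   (Eval SC op dec w lt fl ar bor nb, map (\<lambda>c. c + 8) xs)"
  by (induction xs) (auto simp: Let_def)

lemma sweep_cert_after_next: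
  "nb \<noteq> None \<Longrightarrow> set xs \<subseteq> {1, 2} \<Longrightarrow> sweep verifier_step (Eval SC op dec w lt fl ar bor nb) xs =
   (Eval SC op dec w lt fl ar bor nb, xs)"
  by (induction xs) (auto simp: Let_def)

lemma sweep_mark_cert: assumes y: "set y \<subseteq> {1, 2}"
  shows "sweep verifier_step (Eval SC op dec w lt fl ar bor None) (mark_cert j y) = (if j < length y then
     (Eval SC op dec w lt fl ar bor (Some (instr_of_code (y ! j))), mark_cert (Suc j) y) else (Eval SC op dec w lt fl ar bor None, mark_cert j y))"
proof (cases "j < length y")
  case False
  then have "drop j y = []" by simp
  moreover have "set (take j y) \<subseteq> {1,2}" using y by (meson order_trans set_take_subset)
  ultimately show ?thesis using False by (simp add: mark_cert_def sweep_append sweep_cert_marked)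
next
  case True
  have dr: "drop j y = y ! j # drop (Suc j) y" using True by (simp add: Cons_nth_drop_Suc)
  have yj: "y ! j = 1 \<or> y ! j = 2" using y True nth_mem by blast
  have t: "set (take j y) \<subseteq> {1,2}" using y by (meson order_trans set_take_subset)
  have d: "set (drop (Suc j) y) \<subseteq> {1,2}" using y by (meson order_trans set_drop_subset)
  have c2: "mark_cert (Suc j) y = map (\<lambda>c. c + 8) (take j y) @ [y ! j + 8] @ drop (Suc j) y"
    using True dr by (simp add: mark_cert_def take_Suc_conv_app_nth)
  have r1: "eval_step SC op dec w lt fl ar bor None (y ! j) = (Eval SC op dec w lt fl ar bor (Some (instr_of_code (y ! j))), y ! j + 8)"
    using yj by auto
  have f: "written_symbol (y ! j) (y ! j + 8) = y ! j + 8" using yj by (auto simp: written_symbol_def)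
  show ?thesis using True
    unfolding mark_cert_def dr c2 sweep_append Let_def sweep_cert_marked[OF t] fst_conv snd_conv
    by (simp add: r1 f sweep_cert_after_next[OF _ d] take_Suc_conv_app_nth Let_def del: eval_step.simps)
qed

definition eval_tape :: "letter list list \<Rightarrow> letter list list \<Rightarrow> nat \<Rightarrow> bool list \<Rightarrow> nat list \<Rightarrow> nat list \<Rightarrow> nat \<Rightarrow> nat list" where
  "eval_tape us vs p rs ds y j = concat (map (eval_word p False) us) @ [4] @ eval_v_words p vs rs @ [4] @ ds @ [7] @ mark_cert j y"

lemma sweep_eval_tape:
  assumes rs: "length rs = length vs" and ds: "set ds \<subseteq> {5, 6}" and y: "set y \<subseteq> {1, 2}"
  shows "sweep verifier_step (eval_start op dec) (eval_tape us vs p rs ds y j) =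
   (let lf = foldl (test_u op p) (None, False) us; rs' = update_rejected op (chosen_letter (fst lf)) p vs rs;
        db = decrement_bits (op \<noteq> None \<and> dec) ds;
        st = Eval SC op dec Seek (fst lf) (snd lf \<or> fst db) (\<forall>r\<in>set rs'. r) (fst db) None in
    if j < length y then (Eval SC op dec Seek (fst lf) (snd lf \<or> fst db) (\<forall>r\<in>set rs'. r) (fst db) (Some (instr_of_code (y ! j))),
        eval_tape us vs (advance op p) rs' (snd db) y (Suc j))
    else (Eval SC op dec Seek (fst lf) (snd lf \<or> fst db) (\<forall>r\<in>set rs'. r) (fst db) None,
        eval_tape us vs (advance op p) rs' (snd db) y j))"
proof -
  define lf where "lf = foldl (test_u op p) (None, False) us"
  define rs' where "rs' = update_rejected op (chosen_letter (fst lf)) p vs rs"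
  define db where "db = decrement_bits (op \<noteq> None \<and> dec) ds"
  have s1: "sweep verifier_step (eval_start op dec) (concat (map (eval_word p False) us) @ [4]) =
    (Eval SV op dec Seek (fst lf) (snd lf) True False None, concat (map (eval_word (advance op p) False) us) @ [4])"
    unfolding eval_start_def sweep_append sweep_eval_u_words Let_def fst_conv snd_conv sweep_single lf_def by simp
  have s2: "sweep verifier_step (Eval SV op dec Seek (fst lf) (snd lf) True False None) (eval_v_words p vs rs @ [4]) =
    (Eval SK op dec Seek (fst lf) (snd lf) (\<forall>r\<in>set rs'. r) (op \<noteq> None \<and> dec) None, eval_v_words (advance op p) vs rs' @ [4])"
    unfolding sweep_append sweep_eval_v_words[OF rs] Let_def fst_conv snd_conv sweep_single rs'_def by simp
  have s3: "sweep verifier_step (Eval SK op dec Seek (fst lf) (snd lf) (\<forall>r\<in>set rs'. r) (op \<noteq> None \<and> dec) None) (ds @ [7]) =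
    (Eval SC op dec Seek (fst lf) (snd lf \<or> fst db) (\<forall>r\<in>set rs'. r) (fst db) None, snd db @ [7])"
    unfolding sweep_append sweep_counter[OF ds] Let_def fst_conv snd_conv sweep_single db_def by simp
  have e: "eval_tape us vs p rs ds y j = (concat (map (eval_word p False) us) @ [4]) @ (eval_v_words p vs rs @ [4]) @ (ds @ [7]) @ mark_cert j y"
    by (simp add: eval_tape_def)
  show ?thesis
    unfolding e sweep_append[of _ _ "concat (map (eval_word p False) us) @ [4]"] s1 Let_def fst_conv snd_conv
      sweep_append[of _ _ "eval_v_words p vs rs @ [4]"] s2 sweep_append[of _ _ "ds @ [7]"] s3 sweep_mark_cert[OF y]
    by (simp add: lf_def[symmetric] rs'_def[symmetric] eval_tape_def db_def)
qed

lemma decrement_bits_value: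
  "set ds \<subseteq> {5, 6} \<Longrightarrow> fst (decrement_bits True ds) = (bits_value ds = 0) \<and>
   (0 < bits_value ds \<longrightarrow> bits_value (snd (decrement_bits True ds)) = bits_value ds - 1) \<and> set (snd (decrement_bits True ds)) \<subseteq> {5, 6}"
proof (induction ds)
  case Nil then show ?case by simp
next
  case (Cons d ds)
  then have d: "d = 5 \<or> d = 6" and IH: "fst (decrement_bits True ds) = (bits_value ds = 0) \<and>
   (0 < bits_value ds \<longrightarrow> bits_value (snd (decrement_bits True ds)) = bits_value ds - 1) \<and> set (snd (decrement_bits True ds)) \<subseteq> {5, 6}" by auto
  from d show ?case
  proof
    assume "d = 5" then show ?thesis using IH Cons.prems by auto
  next
    assume "d = 6" then show ?thesis using Cons.prems by auto
  qed
qed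

definition consistent_us :: "letter list list \<Rightarrow> nat \<Rightarrow> bool" where
  "consistent_us us p = (\<not> snd (foldl (test_u (Some Tst) p) (None, False) us))"

definition letter_of_us :: "letter list list \<Rightarrow> nat \<Rightarrow> letter" where
  "letter_of_us us p = chosen_letter (fst (foldl (test_u (Some Tst) p) (None, False) us))"

fun eval_accepts :: "letter list list \<Rightarrow> letter list list \<Rightarrow> instr \<Rightarrow> instr list \<Rightarrow> bool \<Rightarrow> nat \<Rightarrow> bool list \<Rightarrow> nat \<Rightarrow> bool" where
  "eval_accepts us vs o' [] dec p rs kv = (\<not> (o' = Tst \<and> \<not> consistent_us us p) \<and> \<not> (dec \<and> kv = 0) \<and>
     (\<forall>r\<in>set (update_rejected (Some o') (letter_of_us us p) p vs rs). r))"
| "eval_accepts us vs o' (o2 # rest) dec p rs kv = (\<not> (o' = Tst \<and> \<not> consistent_us us p) \<and> \<not> (dec \<and> kv = 0) \<and>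
     eval_accepts us vs o2 rest True (advance (Some o') p) (update_rejected (Some o') (letter_of_us us p) p vs rs) (if dec then kv - 1 else kv))"

lemma foldl_test_u_not_Tst: "op \<noteq> Some Tst \<Longrightarrow> foldl (test_u op p) s us = s"
proof (induction us arbitrary: s)
  case (Cons u us)
  have "test_u op p s u = s" using Cons.prems by (cases op; cases "the op"; cases s) auto
  then show ?case using Cons by simp
qed simp

lemma update_rejected_not_Tst:
  "op \<noteq> Some Tst \<Longrightarrow> length rs = length vs \<Longrightarrow> update_rejected op l p vs rs = rs"
proof (induction vs arbitrary: rs)
  case Nil then show ?case by (simp add: update_rejected_def)
next
  case (Cons v vs)
  then obtain r rs' where "rs = r # rs'" "length rs' = length vs" by (cases rs) auto
  then show ?case using Cons by (simp add: update_rejected_def)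
qed

lemma sweeps_accept_eval_tape:
  assumes y: "set y \<subseteq> {1, 2}"
  shows "j \<le> length y \<Longrightarrow> length rs = length vs \<Longrightarrow> set ds \<subseteq> {5, 6} \<Longrightarrow> length y - j < N \<Longrightarrow>
    sweeps_accept verifier_step verifier_verdict N (eval_start (Some o') dec) (eval_tape us vs p rs ds y j) \<longleftrightarrow> eval_accepts us vs o' (map instr_of_code (drop j y)) dec p rs (bits_value ds)"
proof (induction "length y - j" arbitrary: j o' dec p rs ds N)
  case 0
  then obtain N' where N: "N = Suc N'" by (cases N) auto
  then have jy: "\<not> j < length y" "drop j y = []" using 0 by auto
  define lf where "lf = foldl (test_u (Some o') p) (None, False) us"
  have lfo: "snd lf = (o' = Tst \<and> \<not> consistent_us us p)"
    by (cases o') (auto simp: lf_def consistent_us_def foldl_test_u_not_Tst)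
  have ch: "update_rejected (Some o') (chosen_letter (fst lf)) p vs rs = update_rejected (Some o') (letter_of_us us p) p vs rs"
    by (cases o') (auto simp: lf_def letter_of_us_def update_rejected_def)
  have db: "fst (decrement_bits dec ds) = (dec \<and> bits_value ds = 0)" using decrement_bits_value[OF 0(4)] by (cases dec) auto
  show ?case
    unfolding N sweeps_accept.simps(2) sweep_eval_tape[OF 0(3,4) y] Let_def
    using jy lfo ch db by (auto simp: lf_def[symmetric] simp del: sweeps_accept.simps)
next
  case (Suc m)
  then obtain N' where N: "N = Suc N'" by (cases N) auto
  have jy: "j < length y" "drop j y = y ! j # drop (Suc j) y" using Suc by (auto simp: Cons_nth_drop_Suc)
  define lf where "lf = foldl (test_u (Some o') p) (None, False) us"
  have lfo: "snd lf = (o' = Tst \<and> \<not> consistent_us us p)"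
    by (cases o') (auto simp: lf_def consistent_us_def foldl_test_u_not_Tst)
  have ch: "update_rejected (Some o') (chosen_letter (fst lf)) p vs rs = update_rejected (Some o') (letter_of_us us p) p vs rs"
    by (cases o') (auto simp: lf_def letter_of_us_def update_rejected_def)
  have db: "fst (decrement_bits dec ds) = (dec \<and> bits_value ds = 0)" using decrement_bits_value[OF Suc(5)] by (cases dec) auto
  have ds': "set (snd (decrement_bits dec ds)) \<subseteq> {5, 6}" using decrement_bits_value[OF Suc(5)] Suc(5) by (cases dec) auto
  have dv: "\<not> (dec \<and> bits_value ds = 0) \<Longrightarrow> bits_value (snd (decrement_bits dec ds)) = (if dec then bits_value ds - 1 else bits_value ds)"
    using decrement_bits_value[OF Suc(5)] by (cases dec) auto
  have IH: "sweeps_accept verifier_step verifier_verdict N' (eval_start (Some (instr_of_code (y ! j))) True) (eval_tape us vs (advance (Some o') p) (update_rejected (Some o') (letter_of_us us p) p vs rs) (snd (decrement_bits dec ds)) y (Suc j)) \<longleftrightarrow>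
    eval_accepts us vs (instr_of_code (y ! j)) (map instr_of_code (drop (Suc j) y)) True (advance (Some o') p) (update_rejected (Some o') (letter_of_us us p) p vs rs) (bits_value (snd (decrement_bits dec ds)))"
    by (rule Suc.hyps(1)) (use Suc.hyps(2) jy Suc.prems ds' N in \<open>auto simp: update_rejected_length\<close>)
  show ?case
    unfolding N sweeps_accept.simps(2) sweep_eval_tape[OF Suc(4,5) y] Let_def
    using jy lfo ch db IH dv by (auto simp: lf_def[symmetric] simp del: sweeps_accept.simps)
qed

lemma sweeps_accept_eval_start:
  assumes y: "set y \<subseteq> {1, 2}" and rs: "length rs = length vs" and ds: "set ds \<subseteq> {5, 6}" and N: "length y < N"
  shows "sweeps_accept verifier_step verifier_verdict N (eval_start None False) (eval_tape us vs 0 rs ds y 0) \<longleftrightarrow>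
    y \<noteq> [] \<and> eval_accepts us vs (instr_of_code (hd y)) (map instr_of_code (tl y)) False 0 rs (bits_value ds)"
proof -
  obtain N' where N': "N = Suc N'" using N by (cases N) auto
  have lf: "foldl (test_u None 0) (None, False) us = (None, False)" by (rule foldl_test_u_not_Tst) simp
  have r: "update_rejected None l 0 vs rs = rs" for l by (rule update_rejected_not_Tst[OF _ rs]) simp
  have a: "advance None 0 = 0" by (simp add: advance_def)
  show ?thesis
  proof (cases y)
    case Nil
    then show ?thesis unfolding N' sweeps_accept.simps(2) sweep_eval_tape[OF rs ds y] Let_def lf
      by simp
  next
    case (Cons c y')
    have d1: "drop 1 y = y'" using Cons by simp
    have "sweeps_accept verifier_step verifier_verdict N (eval_start None False) (eval_tape us vs 0 rs ds y 0) \<longleftrightarrow>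
       sweeps_accept verifier_step verifier_verdict N' (eval_start (Some (instr_of_code c)) False) (eval_tape us vs 0 rs ds y 1)"
      unfolding N' sweeps_accept.simps(2) sweep_eval_tape[OF rs ds y] Let_def lf r a
      using Cons by (simp del: sweeps_accept.simps)
    also have "\<dots> \<longleftrightarrow> eval_accepts us vs (instr_of_code c) (map instr_of_code (drop 1 y)) False 0 rs (bits_value ds)"
      by (rule sweeps_accept_eval_tape[OF y]) (use Cons rs ds N N' in auto)
    finally show ?thesis using Cons d1 by simp
  qed
qed

lemma count_words_all_found:
  "length ws \<le> i \<Longrightarrow> count_words i ws = concat (map (eval_word 0 False) ws)"
proof (induction ws arbitrary: i)
  case (Cons w ws)
  then obtain j where "i = Suc j" "length ws \<le> j" by (cases i) auto
  then show ?case using Cons.IH[of j] by (simp add: count_word_def eval_word_def)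
qed simp

lemma eval_v_words_initial:
  "eval_v_words 0 vs (replicate (length vs) False) = concat (map (eval_word 0 False) vs)"
  by (induction vs) (auto simp: eval_v_words_def)

lemma count_tape_eq_eval_tape:
  "length us = length vs \<Longrightarrow> count_tape us vs bits y (length us) = eval_tape us vs 0 (replicate (length vs) False) bits y 0"
  unfolding count_tape_def eval_tape_def using count_words_all_found[of us "length us"] count_words_all_found[of vs "length us"] eval_v_words_initial[of vs]
  by (simp add: mark_cert_def)

lemma update_rejected_nth: "i < length vs \<Longrightarrow> length rs = length vs \<Longrightarrow>
   update_rejected op l p vs rs ! i = (rs ! i \<or> (op = Some Tst \<and> mismatch l p (vs ! i)))"
  by (simp add: update_rejected_def)

lemma eval_accepts_iff:
  "length rs = length vs \<Longrightarrow> eval_accepts us vs o' rest dec p rs kv \<longleftrightarrow>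
   (\<forall>q\<in>tested_positions p (o' # rest). consistent_us us q) \<and> (if dec then 1 else 0) + length rest \<le> kv \<and>
   (\<forall>i<length vs. rs ! i \<or> (\<exists>q\<in>tested_positions p (o' # rest). mismatch (letter_of_us us q) q (vs ! i)))"
proof (induction rest arbitrary: o' dec p rs kv)
  case Nil
  show ?case
  proof (cases o')
    case Adv
    then show ?thesis using Nil update_rejected_nth[OF _ Nil] by (auto simp: all_set_conv_all_nth update_rejected_length)
  next
    case Tst
    then show ?thesis using Nil update_rejected_nth[OF _ Nil] by (auto simp: all_set_conv_all_nth update_rejected_length)
  qed
next
  case (Cons o2 rest)
  define rs' where "rs' = update_rejected (Some o') (letter_of_us us p) p vs rs"
  have l': "length rs' = length vs" using Cons.prems by (simp add: rs'_def update_rejected_length)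
  have n': "\<And>i. i < length vs \<Longrightarrow> rs' ! i = (rs ! i \<or> (o' = Tst \<and> mismatch (letter_of_us us p) p (vs ! i)))"
    unfolding rs'_def using update_rejected_nth[OF _ Cons.prems] by simp
  have eval_accepts: "eval_accepts us vs o' (o2 # rest) dec p rs kv = (\<not> (o' = Tst \<and> \<not> consistent_us us p) \<and> \<not> (dec \<and> kv = 0) \<and>
     eval_accepts us vs o2 rest True (advance (Some o') p) rs' (if dec then kv - 1 else kv))" by (simp add: rs'_def)
  show ?case
  proof (cases o')
    case Adv
    have a: "advance (Some o') p = Suc p" using Adv by (simp add: advance_def)
    show ?thesis unfolding eval_accepts Cons.IH[OF l'] a using Adv n' by auto
  next
    case Tst
    have a: "advance (Some o') p = p" using Tst by (simp add: advance_def)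
    show ?thesis unfolding eval_accepts Cons.IH[OF l'] a using Tst n' by auto
  qed
qed

lemma foldl_test_u_failed: "snd (foldl (test_u (Some Tst) q) (l, True) us)"
proof (induction us arbitrary: l)
  case (Cons u us)
  show ?case
  proof (cases "q < length u")
    case True then show ?thesis using Cons by (cases l) auto
  next
    case False then show ?thesis using Cons by simp
  qed
qed simp

lemma foldl_test_u_Some:
  "foldl (test_u (Some Tst) q) (Some l, f) us = (Some l, f \<or> \<not> (\<forall>u\<in>set us. q < length u \<and> u ! q = l))"
  by (induction us arbitrary: f) auto

lemma consistent_us_iff:
  "consistent_us us q \<longleftrightarrow> (\<forall>u\<in>set us. q < length u \<and> u ! q = letter_of_us us q)"
proof (cases us)
  case Nil then show ?thesis by (simp add: consistent_us_def letter_of_us_def)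
next
  case (Cons u us')
  show ?thesis
  proof (cases "q < length u")
    case True
    then show ?thesis using Cons by (auto simp: consistent_us_def letter_of_us_def foldl_test_u_Some chosen_letter_def)
  next
    case False
    then have "\<not> consistent_us us q" using Cons foldl_test_u_failed[of q None us'] by (simp add: consistent_us_def)
    then show ?thesis using Cons False by auto
  qed
qed

lemma letter_of_us_hd: "q < length u \<Longrightarrow> letter_of_us (u # us) q = u ! q"
  by (simp add: letter_of_us_def foldl_test_u_Some chosen_letter_def)

definition certificate :: "letter list list \<Rightarrow> letter list list \<Rightarrow> nat \<Rightarrow> instr list \<Rightarrow> bool" where
  "certificate us vs k ops \<longleftrightarrow> well_formed ops \<and> Tst \<in> set ops \<and> length ops \<le> Suc k \<and>
     (\<forall>q\<in>tested_positions 0 ops. consistent_us us q) \<and>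
     (\<forall>v\<in>set vs. \<exists>q\<in>tested_positions 0 ops. mismatch (letter_of_us us q) q v)"

lemma separable_if_certificate:
  assumes "certificate us vs k ops"
  shows "\<exists>f. fsize f \<le> k \<and> separates f us vs"
proof (intro exI conjI)
  show "fsize (formula_of (letter_of_us us) 0 ops) \<le> k"
    using assms fsize_formula_of[of ops "letter_of_us us" 0] unfolding certificate_def by simp
  show "separates (formula_of (letter_of_us us) 0 ops) us vs"
    using assms unfolding certificate_def consistent_us_iff by (intro separates_formula_of) auto
qed

lemma certificate_if_separable:
  assumes "fsize f \<le> k" and sep: "separates f us vs" and "length us = length vs"
  obtains ops where "certificate us vs k ops" and "length ops \<le> 3 * length (enc_words us) + 2"
proof (cases us)
  case Nil
  have "1 \<le> k" using assms(1) by (cases f) auto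
  then have "certificate us vs k [Tst, Tst]"
    using Nil assms(3) by (simp add: certificate_def consistent_us_iff)
  then show ?thesis by (rule that) simp
next
  case (Cons u us')
  obtain ops where ops: "well_formed ops" "Tst \<in> set ops" "length ops \<le> fsize f + 1" "length ops \<le> 3 * length u"
    and u: "\<forall>q\<in>tested_positions 0 ops. \<forall>u'\<in>set us. q < length u' \<and> u' ! q = u ! q"
    and v: "\<forall>v\<in>set vs. \<exists>q\<in>tested_positions 0 ops. mismatch (u ! q) q v"
    using certificate_of_separator[OF sep, of u] Cons by auto
  have letter: "letter_of_us us q = u ! q" if "q \<in> tested_positions 0 ops" for q
    using u that Cons by (simp add: letter_of_us_hd)
  have "certificate us vs k ops"
    unfolding certificate_def consistent_us_iff using ops assms(1) u v letter by auto
  moreover have "length u < length (enc_words us)"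
    using Cons by (simp add: enc_words_length)
  ultimately show ?thesis
    using ops(4) by (intro that) auto
qed

lemma sweeps_accept_iff:
  assumes y: "set y \<subseteq> {1, 2}" and N: "length us + length y + 2 < N"
    and ne: "\<forall>w\<in>set (us @ vs). w \<noteq> []" and vy: "well_formed (map instr_of_code y)" "2 \<in> set y"
  shows "sweeps_accept verifier_step verifier_verdict (Suc N) (Syntax U0) (enc_inst us vs k @ [7] @ y) \<longleftrightarrow>
    length us = length vs \<and> certificate us vs k (map instr_of_code y)"
proof -
  let ?rs = "replicate (length vs) False"
  have bits: "set (enc_bin k) \<subseteq> {5, 6}" by (rule enc_bin_set)
  have yne: "y \<noteq> []" using vy by auto
  have ops: "instr_of_code (hd y) # map instr_of_code (tl y) = map instr_of_code y"
    using yne by (cases y) auto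
  have "Tst \<in> set (map instr_of_code y)"
    using vy(2) by force
  have "sweeps_accept verifier_step verifier_verdict (Suc N) (Syntax U0) (enc_inst us vs k @ [7] @ y) \<longleftrightarrow>
     sweeps_accept verifier_step verifier_verdict N (Match SU False False) (count_tape us vs (enc_bin k) y 0)"
    using syntax_dfa_accepts_instance[OF ne y vy, of k] unfolding sweeps_accept_syntax enc_inst_count_tape by simp
  also have "\<dots> \<longleftrightarrow> length us = length vs \<and>
      sweeps_accept verifier_step verifier_verdict (N - length us - 1) (eval_start None False) (eval_tape us vs 0 ?rs (enc_bin k) y 0)"
    using sweeps_accept_count_tape[OF bits y, of 0 us vs N] N count_tape_eq_eval_tape by auto
  also have "\<dots> \<longleftrightarrow> length us = length vs \<and>
      eval_accepts us vs (instr_of_code (hd y)) (map instr_of_code (tl y)) False 0 ?rs k"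
    using sweeps_accept_eval_start[OF y _ bits, of ?rs vs "N - length us - 1" us] N yne
    by (auto simp: bits_value_enc_bin)
  also have "\<dots> \<longleftrightarrow> length us = length vs \<and> certificate us vs k (map instr_of_code y)"
    unfolding eval_accepts_iff[OF length_replicate] ops certificate_def
    using vy \<open>Tst \<in> set (map instr_of_code y)\<close> by (auto simp: all_set_conv_all_nth)
  finally show ?thesis .
qed

lemma in_language_if_sweeps_accept:
  assumes y: "set y \<subseteq> {1, 2}"
    and r: "sweeps_accept verifier_step verifier_verdict N (Syntax U0) (x @ [7] @ y)"
  shows "x \<in> LEARN_LTL_X_AND"
proof -
  obtain N' where N': "N = Suc N'" using r by (cases N) auto
  have "foldl syntax_dfa U0 (x @ [7] @ y) = Cb"
    using r unfolding N' sweeps_accept_syntax by simp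
  then obtain us vs k where uv: "\<forall>w\<in>set (us @ vs). w \<noteq> []" "x = enc_inst us vs k"
      "well_formed (map instr_of_code y)" "2 \<in> set y"
    using instance_if_syntax_dfa_accepts[OF y] by blast
  define N2 where "N2 = max N' (length us + length y + 3)"
  have "sweeps_accept verifier_step verifier_verdict (Suc N2) (Syntax U0) (enc_inst us vs k @ [7] @ y)"
    using sweeps_accept_mono[OF r, of "Suc N2"] uv(2) N' by (simp add: N2_def)
  then have "length us = length vs \<and> certificate us vs k (map instr_of_code y)"
    using sweeps_accept_iff[OF y _ uv(1) uv(3,4), of N2 k] by (simp add: N2_def)
  moreover obtain f where "fsize f \<le> k" "separates f us vs"
    using separable_if_certificate calculation by blast
  ultimately show ?thesis
    unfolding LEARN_LTL_X_AND_def using uv(1,2) by blast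
qed

lemma sweeps_accept_if_in_language:
  assumes "x \<in> LEARN_LTL_X_AND"
  shows "\<exists>y. set y \<subseteq> {1, 2} \<and> length y \<le> 3 * length x + 2 \<and>
    sweeps_accept verifier_step verifier_verdict (4 * length x + 6) (Syntax U0) (x @ [7] @ y)"
proof -
  obtain us vs k f where uv: "x = enc_inst us vs k" "length us = length vs" "\<forall>w\<in>set (us @ vs). w \<noteq> []"
      "fsize f \<le> k" "separates f us vs"
    using assms unfolding LEARN_LTL_X_AND_def by blast
  obtain ops where cert: "certificate us vs k ops" and len: "length ops \<le> 3 * length (enc_words us) + 2"
    using certificate_if_separable[OF uv(4,5,2)] .
  define y where "y = map code_of_instr ops"
  have y: "set y \<subseteq> {1, 2}" "map instr_of_code y = ops"
    unfolding y_def by (rule code_of_instr_range instr_of_code_of_instr)+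
  have "Tst \<in> set ops" using cert by (simp add: certificate_def)
  then have "2 \<in> set y" by (force simp: y_def)
  have ew: "length (enc_words us) \<le> length x" "length us \<le> length (enc_words us)"
    by (simp_all add: uv(1) enc_inst_enc_words enc_words_length)
  have ylen: "length y \<le> 3 * length x + 2"
    using len ew by (simp add: y_def)
  have "well_formed (map instr_of_code y)"
    using cert y(2) by (simp add: certificate_def)
  then have "sweeps_accept verifier_step verifier_verdict (Suc (length us + length y + 3)) (Syntax U0) (x @ [7] @ y)"
    unfolding uv(1) using sweeps_accept_iff[OF y(1) _ uv(3) _ \<open>2 \<in> set y\<close>, of "length us + length y + 3" k]
      uv(2) cert y(2) by (simp del: sweeps_accept.simps)
  then have "sweeps_accept verifier_step verifier_verdict (4 * length x + 6) (Syntax U0) (x @ [7] @ y)"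
    by (rule sweeps_accept_mono) (use ew ylen in simp)
  then show ?thesis using y(1) ylen by blast
qed

lemma verifier_input_nonzero:
  "set x \<subseteq> {1..6} \<Longrightarrow> set y \<subseteq> {1, 2} \<Longrightarrow> \<forall>c\<in>set (x @ [7] @ y). (c::nat) \<noteq> 0"
  by fastforce

lemma verifier_accepts_in_quadratic_time:
  assumes "set x \<subseteq> {1..6}" and "set y \<subseteq> {1, 2}" and "length y \<le> 3 * length x + 2"
    and "sweeps_accept verifier_step verifier_verdict (4 * length x + 6) (Syntax U0) (x @ [7] @ y)"
  shows "accepts_within verifier_tm (x @ [7] @ y) (48 * (length x + 1) ^ 2)"
proof (rule accepts_within_mono)
  let ?z = "x @ [7] @ y"
  show "accepts_within verifier_tm ?z ((4 * length x + 6) * (2 * length ?z + 2))"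
    unfolding verifier_tm_def
    by (rule sweep_tm_accepts_if_sweeps_accept[OF assms(4) verifier_input_nonzero[OF assms(1,2)]]) simp
  have "(4 * length x + 6) * (2 * length ?z + 2) \<le> (6 * (length x + 1)) * (8 * (length x + 1))"
    using assms(3) by (intro mult_le_mono) simp_all
  then show "(4 * length x + 6) * (2 * length ?z + 2) \<le> 48 * (length x + 1) ^ 2"
    by (simp add: power2_eq_square algebra_simps)
qed

lemma verifier_tm_verifies:
  assumes x: "set x \<subseteq> {1..6}"
  shows "x \<in> LEARN_LTL_X_AND \<longleftrightarrow> (\<exists>y. set y \<subseteq> {1, 2} \<and> length y \<le> 48 * (length x + 1) ^ 2 \<and>
      accepts_within verifier_tm (x @ [7] @ y) (48 * (length x + 1) ^ 2))"
proof
  assume "x \<in> LEARN_LTL_X_AND"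
  then obtain y where y: "set y \<subseteq> {1, 2}" "length y \<le> 3 * length x + 2"
    and "sweeps_accept verifier_step verifier_verdict (4 * length x + 6) (Syntax U0) (x @ [7] @ y)"
    using sweeps_accept_if_in_language by blast
  moreover have "3 * length x + 2 \<le> 48 * (length x + 1) ^ 2"
    by (simp add: power2_eq_square algebra_simps)
  ultimately show "\<exists>y. set y \<subseteq> {1, 2} \<and> length y \<le> 48 * (length x + 1) ^ 2 \<and>
      accepts_within verifier_tm (x @ [7] @ y) (48 * (length x + 1) ^ 2)"
    using verifier_accepts_in_quadratic_time[OF x] by (meson order_trans)
next
  assume "\<exists>y. set y \<subseteq> {1, 2} \<and> length y \<le> 48 * (length x + 1) ^ 2 \<and>
      accepts_within verifier_tm (x @ [7] @ y) (48 * (length x + 1) ^ 2)"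
  then obtain y t where y: "set y \<subseteq> {1, 2}" and "accepts_within verifier_tm (x @ [7] @ y) t"
    by blast
  then obtain N where "sweeps_accept verifier_step verifier_verdict N (Syntax U0) (x @ [7] @ y)"
    using sweeps_accept_if_sweep_tm_accepts verifier_input_nonzero[OF x y]
    unfolding verifier_tm_def by blast
  then show "x \<in> LEARN_LTL_X_AND"
    by (rule in_language_if_sweeps_accept[OF y])
qed

theorem theorem2:
  shows "in_NP LEARN_LTL_X_AND"
  unfolding in_NP_def
proof (intro exI conjI)
  show "tm_wf verifier_tm"
    unfolding verifier_tm_def by (rule sweep_tm_wf)
  show "7 < tm_S verifier_tm"
    by (simp add: verifier_tm_def sweep_tm_def)
  show "\<forall>x. set x \<subseteq> {1..6} \<longrightarrow> (x \<in> LEARN_LTL_X_AND \<longleftrightarrow> (\<exists>y. set y \<subseteq> {1, 2} \<and>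
      length y \<le> 48 * (length x + 1) ^ 2 \<and> accepts_within verifier_tm (x @ [7] @ y) (48 * (length x + 1) ^ 2)))"
    using verifier_tm_verifies by blast
qed

end
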